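(* Let $\mathcal{Q}$ be a small involutive quantaloid. For every $\mathcal{Q}$-category $\mathbb{A}$, the assignment $L_{\mathbb{A}}\colon(\mathbb{A}_{\mathsf s})_{\mathsf{sc}}\to(\mathbb{A}_{\mathsf{cc}})_{\mathsf s}$, $\phi\mapsto\mathbb{A}(-,S_{\mathbb{A}}-)\otimes\phi$, is a full embedding of $\mathcal{Q}$-categories (fully faithful and injective on objects), and these functors form a natural transformation $L\colon(-)_{\mathsf{sc}}\circ(-)_{\mathsf s}\Rightarrow(-)_{\mathsf s}\circ(-)_{\mathsf{cc}}$ of functors $\mathsf{Cat}(\mathcal{Q})\to\mathsf{SymCat}(\mathcal{Q})$. Moreover, for every $\mathcal{Q}$-category $\mathbb{A}$, $(\mathbb{A}_{\mathsf{cc}})_{\mathsf s}$ is symmetrically complete.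
   Context: A quantaloid is a category enriched in $\mathsf{Sup}$; an involution is an identity-on-objects, direction-reversing, monotone map $f\mapsto f^{\mathsf o}$ on morphisms with $(g\circ f)^{\mathsf o}=f^{\mathsf o}\circ g^{\mathsf o}$, $f^{\mathsf{oo}}=f$. A $\mathcal{Q}$-category $\mathbb{A}$: objects with types $tx$, homs $\mathbb{A}(y,x)\colon tx\to ty$ with $\mathbb{A}(z,y)\circ\mathbb{A}(y,x)\le\mathbb{A}(z,x)$, $1_{tx}\le\mathbb{A}(x,x)$; symmetric if $\mathbb{A}(x,y)=\mathbb{A}(y,x)^{\mathsf o}$. Functors: type-preserving $F$ with $\mathbb{A}(y,x)\le\mathbb{B}(Fy,Fx)$; categories $\mathsf{Cat}(\mathcal{Q})$ and (full) $\mathsf{SymCat}(\mathcal{Q})$. Symmetrisation: $\mathbb{A}_{\mathsf s}$ has the same objects and $\mathbb{A}_{\mathsf s}(y,x)=\mathbb{A}(y,x)\wedge\mathbb{A}(x,y)^{\mathsf o}$; $F_{\mathsf s}x=Fx$; $S_{\mathbb{A}}\colon\mathbb{A}_{\mathsf s}\to\mathbb{A}$ is the identity on objects. Distributors $\Phi\colon\mathbb{A}\to\mathbb{B}$: arrows $\Phi(y,x)\colon tx\to ty$ with $\mathbb{B}(y',y)\circ\Phi(y,x)\le\Phi(y',x)$, $\Phi(y,x)\circ\mathbb{A}(x,x')\le\Phi(y,x')$; composition $(\Psi\otimes\Phi)(z,x)=\bigvee_y\Psi(z,y)\circ\Phi(y,x)$; left adjoint with right adjoint $\Phi^*$ if $\mathbb{A}\le\Phi^*\otimes\Phi$,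 $\Phi\otimes\Phi^*\le\mathbb{B}$. A functor $F$ gives the distributor $\mathbb{B}(-,F-)$ (elements $\mathbb{B}(y,Fx)$); e.g. $\mathbb{A}(-,S_{\mathbb{A}}-)\colon\mathbb{A}_{\mathsf s}\to\mathbb{A}$ has elements $\mathbb{A}(y,x)$. For symmetric domain and codomain, $\Phi^{\mathsf o}(x,y)=\Phi(y,x)^{\mathsf o}$, and $\Phi$ is a symmetric left adjoint if left adjoint to $\Phi^{\mathsf o}$. $*_X$: one object of type $X$, hom $1_X$; presheaf: distributor $*_X\to\mathbb{A}$, representable if equal to $\mathbb{A}(-,a)$. Cauchy completion $\mathbb{A}_{\mathsf{cc}}$: objects the left adjoint presheaves $\phi\colon*_X\to\mathbb{A}$ (type $X$), hom the unique element of $\psi^*\otimes\phi$; $F_{\mathsf{cc}}(\phi)=\mathbb{B}(-,F-)\otimes\phi$. For symmetric $\mathbb{A}$, $\mathbb{A}_{\mathsf{sc}}$ is the full subcategory of $\mathbb{A}_{\mathsf{cc}}$ on symmetric left adjoint presheaves, and $F_{\mathsf{sc}}(\phi)=\mathbb{B}(-,F-)\otimes\phi$. A symmetric $\mathcal{Q}$-category is symmetrically complete if each of its symmetric left adjoint presheaves is representable. Naturality of $L$ means $(F_{\mathsf{cc}})_{\mathsf s}\circ L_{\mathbb{A}}=L_{\mathbb{B}}\circ(F_{\mathsf s})_{\mathsf{sc}}$ for every functor $F\colon\mathbb{A}\to\mathbb{B}$. *)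

theory Defs
  imports Main
begin

text \<open>A small quantaloid is given by a set of objects, a set of arrows with domain and
codomain, a partial order on each hom-set, joins of arbitrary subsets of each hom-set,
composition (qcomp g f = g after f) and identities.\<close>

record ('o, 'm) iquantaloid =
  qobj  :: "'o set"
  qarr  :: "'m set"
  qdom  :: "'m \<Rightarrow> 'o"
  qcod  :: "'m \<Rightarrow> 'o"
  qle   :: "'m \<Rightarrow> 'm \<Rightarrow> bool"
  qjoin :: "'o \<Rightarrow> 'o \<Rightarrow> 'm set \<Rightarrow> 'm"
  qcomp :: "'m \<Rightarrow> 'm \<Rightarrow> 'm"
  qid   :: "'o \<Rightarrow> 'm"
  qinv  :: "'m \<Rightarrow> 'm"

definition qhom :: "('o, 'm, 'z) iquantaloid_scheme \<Rightarrow> 'o \<Rightarrow> 'o \<Rightarrow> 'm set" where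
  "qhom Q X Y = {f \<in> qarr Q. qdom Q f = X \<and> qcod Q f = Y}"

definition iquantaloid :: "('o, 'm, 'z) iquantaloid_scheme \<Rightarrow> bool" where
  "iquantaloid Q \<longleftrightarrow>
     (\<forall>f\<in>qarr Q. qdom Q f \<in> qobj Q \<and> qcod Q f \<in> qobj Q)
   \<and> (\<forall>X\<in>qobj Q. \<forall>Y\<in>qobj Q.
        (\<forall>f\<in>qhom Q X Y. qle Q f f)
      \<and> (\<forall>f\<in>qhom Q X Y. \<forall>g\<in>qhom Q X Y. qle Q f g \<and> qle Q g f \<longrightarrow> f = g)
      \<and> (\<forall>f\<in>qhom Q X Y. \<forall>g\<in>qhom Q X Y. \<forall>h\<in>qhom Q X Y.
            qle Q f g \<and> qle Q g h \<longrightarrow> qle Q f h))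
   \<and> (\<forall>X\<in>qobj Q. \<forall>Y\<in>qobj Q. \<forall>S. S \<subseteq> qhom Q X Y \<longrightarrow>
        qjoin Q X Y S \<in> qhom Q X Y
      \<and> (\<forall>s\<in>S. qle Q s (qjoin Q X Y S))
      \<and> (\<forall>u\<in>qhom Q X Y. (\<forall>s\<in>S. qle Q s u) \<longrightarrow> qle Q (qjoin Q X Y S) u))
   \<and> (\<forall>X\<in>qobj Q. qid Q X \<in> qhom Q X X)
   \<and> (\<forall>X\<in>qobj Q. \<forall>Y\<in>qobj Q. \<forall>Z\<in>qobj Q. \<forall>f\<in>qhom Q X Y. \<forall>g\<in>qhom Q Y Z.
        qcomp Q g f \<in> qhom Q X Z)
   \<and> (\<forall>W\<in>qobj Q. \<forall>X\<in>qobj Q. \<forall>Y\<in>qobj Q. \<forall>Z\<in>qobj Q.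
        \<forall>f\<in>qhom Q W X. \<forall>g\<in>qhom Q X Y. \<forall>h\<in>qhom Q Y Z.
        qcomp Q h (qcomp Q g f) = qcomp Q (qcomp Q h g) f)
   \<and> (\<forall>X\<in>qobj Q. \<forall>Y\<in>qobj Q. \<forall>f\<in>qhom Q X Y.
        qcomp Q f (qid Q X) = f \<and> qcomp Q (qid Q Y) f = f)
   \<and> (\<forall>X\<in>qobj Q. \<forall>Y\<in>qobj Q. \<forall>Z\<in>qobj Q.
        (\<forall>f\<in>qhom Q X Y. \<forall>S. S \<subseteq> qhom Q Y Z \<longrightarrow>
           qcomp Q (qjoin Q Y Z S) f = qjoin Q X Z ((\<lambda>g. qcomp Q g f) ` S))
      \<and> (\<forall>g\<in>qhom Q Y Z. \<forall>S. S \<subseteq> qhom Q X Y \<longrightarrow>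
           qcomp Q g (qjoin Q X Y S) = qjoin Q X Z ((\<lambda>f. qcomp Q g f) ` S)))
   \<and> (\<forall>X\<in>qobj Q. \<forall>Y\<in>qobj Q. \<forall>f\<in>qhom Q X Y.
        qinv Q f \<in> qhom Q Y X \<and> qinv Q (qinv Q f) = f)
   \<and> (\<forall>X\<in>qobj Q. \<forall>Y\<in>qobj Q. \<forall>f\<in>qhom Q X Y. \<forall>g\<in>qhom Q X Y.
        qle Q f g \<longrightarrow> qle Q (qinv Q f) (qinv Q g))
   \<and> (\<forall>X\<in>qobj Q. \<forall>Y\<in>qobj Q. \<forall>Z\<in>qobj Q. \<forall>f\<in>qhom Q X Y. \<forall>g\<in>qhom Q Y Z.
        qinv Q (qcomp Q g f) = qcomp Q (qinv Q f) (qinv Q g))"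

definition qmeet :: "('o, 'm, 'z) iquantaloid_scheme \<Rightarrow> 'o \<Rightarrow> 'o \<Rightarrow> 'm \<Rightarrow> 'm \<Rightarrow> 'm" where
  "qmeet Q X Y a b = qjoin Q X Y {c \<in> qhom Q X Y. qle Q c a \<and> qle Q c b}"

text \<open>chom A y x is the hom A(y,x) : t x \<rightarrow> t y.\<close>
record ('a, 'o, 'm) qcat =
  cobj  :: "'a set"
  ctype :: "'a \<Rightarrow> 'o"
  chom  :: "'a \<Rightarrow> 'a \<Rightarrow> 'm"

definition qcat :: "('o, 'm, 'z) iquantaloid_scheme \<Rightarrow> ('a, 'o, 'm) qcat \<Rightarrow> bool" where
  "qcat Q A \<longleftrightarrow>
     (\<forall>x\<in>cobj A. ctype A x \<in> qobj Q)
   \<and> (\<forall>x\<in>cobj A. \<forall>y\<in>cobj A. chom A y x \<in> qhom Q (ctype A x) (ctype A y))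
   \<and> (\<forall>x\<in>cobj A. \<forall>y\<in>cobj A. \<forall>z\<in>cobj A.
        qle Q (qcomp Q (chom A z y) (chom A y x)) (chom A z x))
   \<and> (\<forall>x\<in>cobj A. qle Q (qid Q (ctype A x)) (chom A x x))"

definition sym_qcat :: "('o, 'm, 'z) iquantaloid_scheme \<Rightarrow> ('a, 'o, 'm) qcat \<Rightarrow> bool" where
  "sym_qcat Q A \<longleftrightarrow> (\<forall>x\<in>cobj A. \<forall>y\<in>cobj A. chom A x y = qinv Q (chom A y x))"

definition qfunctor :: "('o, 'm, 'z) iquantaloid_scheme \<Rightarrow> ('a, 'o, 'm) qcat \<Rightarrow> ('b, 'o, 'm) qcat
    \<Rightarrow> ('a \<Rightarrow> 'b) \<Rightarrow> bool" where
  "qfunctor Q A B F \<longleftrightarrow>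
     (\<forall>x\<in>cobj A. F x \<in> cobj B \<and> ctype B (F x) = ctype A x)
   \<and> (\<forall>x\<in>cobj A. \<forall>y\<in>cobj A. qle Q (chom A y x) (chom B (F y) (F x)))"

definition full_embedding :: "('o, 'm, 'z) iquantaloid_scheme \<Rightarrow> ('a, 'o, 'm) qcat \<Rightarrow> ('b, 'o, 'm) qcat
    \<Rightarrow> ('a \<Rightarrow> 'b) \<Rightarrow> bool" where
  "full_embedding Q A B F \<longleftrightarrow>
     qfunctor Q A B F
   \<and> (\<forall>x\<in>cobj A. \<forall>y\<in>cobj A. chom B (F y) (F x) = chom A y x)
   \<and> inj_on F (cobj A)"

definition symz :: "('o, 'm, 'z) iquantaloid_scheme \<Rightarrow> ('a, 'o, 'm) qcat \<Rightarrow> ('a, 'o, 'm) qcat" where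
  "symz Q A = \<lparr> cobj = cobj A, ctype = ctype A,
     chom = (\<lambda>y x. qmeet Q (ctype A x) (ctype A y) (chom A y x) (qinv Q (chom A x y))) \<rparr>"

text \<open>Distributors \<Phi> : A \<rightarrow> B, with elements \<Phi> y x : t x \<rightarrow> t y (x in A, y in B).\<close>
definition distributor :: "('o, 'm, 'z) iquantaloid_scheme \<Rightarrow> ('a, 'o, 'm) qcat \<Rightarrow> ('b, 'o, 'm) qcat
    \<Rightarrow> ('b \<Rightarrow> 'a \<Rightarrow> 'm) \<Rightarrow> bool" where
  "distributor Q A B \<Phi> \<longleftrightarrow>
     (\<forall>x\<in>cobj A. \<forall>y\<in>cobj B. \<Phi> y x \<in> qhom Q (ctype A x) (ctype B y))
   \<and> (\<forall>x\<in>cobj A. \<forall>y\<in>cobj B. \<forall>y'\<in>cobj B. qle Q (qcomp Q (chom B y' y) (\<Phi> y x)) (\<Phi> y' x))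
   \<and> (\<forall>x\<in>cobj A. \<forall>x'\<in>cobj A. \<forall>y\<in>cobj B. qle Q (qcomp Q (\<Phi> y x) (chom A x x')) (\<Phi> y x'))"

definition dcomp :: "('o, 'm, 'z) iquantaloid_scheme \<Rightarrow> ('a, 'o, 'm) qcat \<Rightarrow> ('b, 'o, 'm) qcat
    \<Rightarrow> ('c, 'o, 'm) qcat \<Rightarrow> ('c \<Rightarrow> 'b \<Rightarrow> 'm) \<Rightarrow> ('b \<Rightarrow> 'a \<Rightarrow> 'm) \<Rightarrow> 'c \<Rightarrow> 'a \<Rightarrow> 'm" where
  "dcomp Q A B C \<Psi> \<Phi> z x =
     qjoin Q (ctype A x) (ctype C z) ((\<lambda>y. qcomp Q (\<Psi> z y) (\<Phi> y x)) ` cobj B)"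

definition left_adjoint_to :: "('o, 'm, 'z) iquantaloid_scheme \<Rightarrow> ('a, 'o, 'm) qcat \<Rightarrow> ('b, 'o, 'm) qcat
    \<Rightarrow> ('b \<Rightarrow> 'a \<Rightarrow> 'm) \<Rightarrow> ('a \<Rightarrow> 'b \<Rightarrow> 'm) \<Rightarrow> bool" where
  "left_adjoint_to Q A B \<Phi> \<Psi> \<longleftrightarrow>
     distributor Q A B \<Phi> \<and> distributor Q B A \<Psi>
   \<and> (\<forall>x\<in>cobj A. \<forall>x'\<in>cobj A. qle Q (chom A x' x) (dcomp Q A B A \<Psi> \<Phi> x' x))
   \<and> (\<forall>y\<in>cobj B. \<forall>y'\<in>cobj B. qle Q (dcomp Q B A B \<Phi> \<Psi> y' y) (chom B y' y))"

definition dual_dist :: "('o, 'm, 'z) iquantaloid_scheme \<Rightarrow> ('b \<Rightarrow> 'a \<Rightarrow> 'm) \<Rightarrow> ('a \<Rightarrow> 'b \<Rightarrow> 'm)" where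
  "dual_dist Q \<Phi> = (\<lambda>x y. qinv Q (\<Phi> y x))"

definition unit_cat :: "('o, 'm, 'z) iquantaloid_scheme \<Rightarrow> 'o \<Rightarrow> (unit, 'o, 'm) qcat" where
  "unit_cat Q X = \<lparr> cobj = {()}, ctype = (\<lambda>_. X), chom = (\<lambda>_ _. qid Q X) \<rparr>"

text \<open>A presheaf \<phi> : *_X \<rightarrow> A is represented by the pair (X, \<phi>) with \<phi> y = \<phi>(y,*),
  extensional (undefined) outside the objects of A.\<close>

definition as_dist :: "('a \<Rightarrow> 'm) \<Rightarrow> ('a \<Rightarrow> unit \<Rightarrow> 'm)" where
  "as_dist \<phi> = (\<lambda>y _. \<phi> y)"

definition left_adj_presheaf :: "('o, 'm, 'z) iquantaloid_scheme \<Rightarrow> ('a, 'o, 'm) qcat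
    \<Rightarrow> 'o \<Rightarrow> ('a \<Rightarrow> 'm) \<Rightarrow> bool" where
  "left_adj_presheaf Q A X \<phi> \<longleftrightarrow> (\<exists>\<Psi>. left_adjoint_to Q (unit_cat Q X) A (as_dist \<phi>) \<Psi>)"

definition sym_left_adj_presheaf :: "('o, 'm, 'z) iquantaloid_scheme \<Rightarrow> ('a, 'o, 'm) qcat
    \<Rightarrow> 'o \<Rightarrow> ('a \<Rightarrow> 'm) \<Rightarrow> bool" where
  "sym_left_adj_presheaf Q A X \<phi> \<longleftrightarrow>
     left_adjoint_to Q (unit_cat Q X) A (as_dist \<phi>) (dual_dist Q (as_dist \<phi>))"

definition right_adj :: "('o, 'm, 'z) iquantaloid_scheme \<Rightarrow> ('a, 'o, 'm) qcat
    \<Rightarrow> 'o \<Rightarrow> ('a \<Rightarrow> 'm) \<Rightarrow> (unit \<Rightarrow> 'a \<Rightarrow> 'm)" where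
  "right_adj Q A X \<phi> = (SOME \<Psi>. left_adjoint_to Q (unit_cat Q X) A (as_dist \<phi>) \<Psi>)"

definition extensional_on :: "'a set \<Rightarrow> ('a \<Rightarrow> 'm) \<Rightarrow> bool" where
  "extensional_on S f \<longleftrightarrow> (\<forall>y. y \<notin> S \<longrightarrow> f y = undefined)"

text \<open>Hom of the Cauchy completion: the unique element of psi-star \<otimes> \<phi>.\<close>
definition cc_hom :: "('o, 'm, 'z) iquantaloid_scheme \<Rightarrow> ('a, 'o, 'm) qcat
    \<Rightarrow> 'o \<times> ('a \<Rightarrow> 'm) \<Rightarrow> 'o \<times> ('a \<Rightarrow> 'm) \<Rightarrow> 'm" where
  "cc_hom Q A p q = dcomp Q (unit_cat Q (fst q)) A (unit_cat Q (fst p))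
       (right_adj Q A (fst p) (snd p)) (as_dist (snd q)) () ()"

definition cauchy :: "('o, 'm, 'z) iquantaloid_scheme \<Rightarrow> ('a, 'o, 'm) qcat
    \<Rightarrow> ('o \<times> ('a \<Rightarrow> 'm), 'o, 'm) qcat" where
  "cauchy Q A = \<lparr> cobj = {(X, \<phi>). X \<in> qobj Q \<and> extensional_on (cobj A) \<phi>
                                 \<and> left_adj_presheaf Q A X \<phi>},
                  ctype = fst, chom = cc_hom Q A \<rparr>"

text \<open>Symmetric completion A_sc (meant for symmetric A): full subcategory of A_cc on the
  symmetric left adjoint presheaves.\<close>
definition symcomp :: "('o, 'm, 'z) iquantaloid_scheme \<Rightarrow> ('a, 'o, 'm) qcat
    \<Rightarrow> ('o \<times> ('a \<Rightarrow> 'm), 'o, 'm) qcat" where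
  "symcomp Q A = \<lparr> cobj = {p \<in> cobj (cauchy Q A). sym_left_adj_presheaf Q A (fst p) (snd p)},
                   ctype = fst, chom = cc_hom Q A \<rparr>"

definition pres_comp :: "('o, 'm, 'z) iquantaloid_scheme \<Rightarrow> ('a, 'o, 'm) qcat \<Rightarrow> ('b, 'o, 'm) qcat
    \<Rightarrow> ('b \<Rightarrow> 'a \<Rightarrow> 'm) \<Rightarrow> 'o \<times> ('a \<Rightarrow> 'm) \<Rightarrow> 'o \<times> ('b \<Rightarrow> 'm)" where
  "pres_comp Q A B \<Phi> p = (fst p, (\<lambda>b. if b \<in> cobj B
       then dcomp Q (unit_cat Q (fst p)) A B \<Phi> (as_dist (snd p)) b () else undefined))"

text \<open>F_cc (also F_sc when A, B are symmetric): \<phi> \<mapsto> B(-,F-) \<otimes> \<phi>.\<close>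
definition cc_map :: "('o, 'm, 'z) iquantaloid_scheme \<Rightarrow> ('a, 'o, 'm) qcat \<Rightarrow> ('b, 'o, 'm) qcat
    \<Rightarrow> ('a \<Rightarrow> 'b) \<Rightarrow> 'o \<times> ('a \<Rightarrow> 'm) \<Rightarrow> 'o \<times> ('b \<Rightarrow> 'm)" where
  "cc_map Q A B F = pres_comp Q A B (\<lambda>b a. chom B b (F a))"

definition Lmap :: "('o, 'm, 'z) iquantaloid_scheme \<Rightarrow> ('a, 'o, 'm) qcat
    \<Rightarrow> 'o \<times> ('a \<Rightarrow> 'm) \<Rightarrow> 'o \<times> ('a \<Rightarrow> 'm)" where
  "Lmap Q A = pres_comp Q (symz Q A) A (\<lambda>y x. chom A y x)"

definition sym_complete :: "('o, 'm, 'z) iquantaloid_scheme \<Rightarrow> ('a, 'o, 'm) qcat \<Rightarrow> bool" where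
  "sym_complete Q A \<longleftrightarrow>
     (\<forall>X\<in>qobj Q. \<forall>\<phi>. sym_left_adj_presheaf Q A X \<phi> \<longrightarrow>
        (\<exists>a\<in>cobj A. ctype A a = X \<and> (\<forall>y\<in>cobj A. \<phi> y = chom A y a)))"

end

theory Submission
  imports Defs
begin

text \<open>
  Write \<open>L \<phi> = A(-, S-) \<otimes> \<phi>\<close>; its right adjoint is \<open>\<phi>\<^sup>o \<otimes> A(S-, -)\<close>, so \<open>L \<phi>\<close> is a Cauchy presheaf.
  For symmetric \<open>\<phi>, \<psi>\<close> the hom \<open>\<psi>\<^sup>o \<otimes> \<phi>\<close> of \<open>(A\<^sub>s)\<^sub>s\<^sub>c\<close> lies below the hom from \<open>L \<phi>\<close> to \<open>L \<psi>\<close> in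
  \<open>A\<^sub>c\<^sub>c\<close> and below the dual of the reverse hom; conversely any \<open>u\<close> below both satisfies
  \<open>\<psi> \<circ> u \<circ> \<phi>\<^sup>o \<le> A\<^sub>s\<close>, and the units of \<open>\<phi>\<close> and \<open>\<psi>\<close> then give \<open>u \<le> \<psi>\<^sup>o \<otimes> \<phi>\<close>. So \<open>L\<close> is fully
  faithful, and it is injective because \<open>1 \<le> \<psi>\<^sup>o \<otimes> \<phi>\<close> already forces \<open>\<psi> \<le> \<phi>\<close>.
  A symmetric left adjoint presheaf \<open>\<Phi>\<close> on \<open>(A\<^sub>c\<^sub>c)\<^sub>s\<close> is represented by the Cauchy presheaf
  \<open>a \<mapsto> \<Or>\<^sub>p p(a) \<circ> \<Phi>(p)\<close>, whose right adjoint is \<open>a \<mapsto> \<Or>\<^sub>p \<Phi>(p)\<^sup>o \<circ> p\<^sup>*(a)\<close>.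
\<close>

section \<open>Involutive quantaloids\<close>

locale involutive_quantaloid =
  fixes Q :: "('o, 'm, 'z) iquantaloid_scheme"
  assumes iquantaloid: "iquantaloid Q"
begin

abbreviation arr where "arr f \<equiv> f \<in> qarr Q"
abbreviation src where "src f \<equiv> qdom Q f"
abbreviation trg where "trg f \<equiv> qcod Q f"
abbreviation idq where "idq X \<equiv> qid Q X"
abbreviation Join where "Join X Y S \<equiv> qjoin Q X Y S"
abbreviation compose (infixr "\<cdot>" 75) where "g \<cdot> f \<equiv> qcomp Q g f"
abbreviation dual ("(_\<^sup>o)" [1000] 999) where "f\<^sup>o \<equiv> qinv Q f"

lemma
  shows ax_typed: "\<forall>f\<in>qarr Q. src f \<in> qobj Q \<and> trg f \<in> qobj Q"
    and ax_order: "\<forall>X\<in>qobj Q. \<forall>Y\<in>qobj Q.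
        (\<forall>f\<in>qhom Q X Y. qle Q f f)
      \<and> (\<forall>f\<in>qhom Q X Y. \<forall>g\<in>qhom Q X Y. qle Q f g \<and> qle Q g f \<longrightarrow> f = g)
      \<and> (\<forall>f\<in>qhom Q X Y. \<forall>g\<in>qhom Q X Y. \<forall>h\<in>qhom Q X Y. qle Q f g \<and> qle Q g h \<longrightarrow> qle Q f h)"
    and ax_join: "\<forall>X\<in>qobj Q. \<forall>Y\<in>qobj Q. \<forall>S. S \<subseteq> qhom Q X Y \<longrightarrow>
        Join X Y S \<in> qhom Q X Y \<and> (\<forall>s\<in>S. qle Q s (Join X Y S))
      \<and> (\<forall>u\<in>qhom Q X Y. (\<forall>s\<in>S. qle Q s u) \<longrightarrow> qle Q (Join X Y S) u)"
    and ax_id: "\<forall>X\<in>qobj Q. idq X \<in> qhom Q X X"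
    and ax_comp: "\<forall>X\<in>qobj Q. \<forall>Y\<in>qobj Q. \<forall>Z\<in>qobj Q. \<forall>f\<in>qhom Q X Y. \<forall>g\<in>qhom Q Y Z.
        g \<cdot> f \<in> qhom Q X Z"
    and ax_assoc: "\<forall>W\<in>qobj Q. \<forall>X\<in>qobj Q. \<forall>Y\<in>qobj Q. \<forall>Z\<in>qobj Q.
        \<forall>f\<in>qhom Q W X. \<forall>g\<in>qhom Q X Y. \<forall>h\<in>qhom Q Y Z. h \<cdot> (g \<cdot> f) = (h \<cdot> g) \<cdot> f"
    and ax_unit: "\<forall>X\<in>qobj Q. \<forall>Y\<in>qobj Q. \<forall>f\<in>qhom Q X Y. f \<cdot> idq X = f \<and> idq Y \<cdot> f = f"
    and ax_distrib: "\<forall>X\<in>qobj Q. \<forall>Y\<in>qobj Q. \<forall>Z\<in>qobj Q.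
        (\<forall>f\<in>qhom Q X Y. \<forall>S. S \<subseteq> qhom Q Y Z \<longrightarrow> Join Y Z S \<cdot> f = Join X Z ((\<lambda>g. g \<cdot> f) ` S))
      \<and> (\<forall>g\<in>qhom Q Y Z. \<forall>S. S \<subseteq> qhom Q X Y \<longrightarrow> g \<cdot> Join X Y S = Join X Z ((\<lambda>f. g \<cdot> f) ` S))"
    and ax_dual: "\<forall>X\<in>qobj Q. \<forall>Y\<in>qobj Q. \<forall>f\<in>qhom Q X Y. f\<^sup>o \<in> qhom Q Y X \<and> (f\<^sup>o)\<^sup>o = f"
    and ax_dual_mono: "\<forall>X\<in>qobj Q. \<forall>Y\<in>qobj Q. \<forall>f\<in>qhom Q X Y. \<forall>g\<in>qhom Q X Y.
        qle Q f g \<longrightarrow> qle Q (f\<^sup>o) (g\<^sup>o)"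
    and ax_dual_comp: "\<forall>X\<in>qobj Q. \<forall>Y\<in>qobj Q. \<forall>Z\<in>qobj Q. \<forall>f\<in>qhom Q X Y. \<forall>g\<in>qhom Q Y Z.
        (g \<cdot> f)\<^sup>o = f\<^sup>o \<cdot> g\<^sup>o"
  by (insert iquantaloid, unfold iquantaloid_def, elim conjE, assumption)+

lemma in_qhom_iff [simp]: "f \<in> qhom Q X Y \<longleftrightarrow> arr f \<and> src f = X \<and> trg f = Y"
  by (simp add: qhom_def)

lemma image_in_qhom_iff [simp]:
  "f ` I \<subseteq> qhom Q X Y \<longleftrightarrow> (\<forall>i\<in>I. arr (f i) \<and> src (f i) = X \<and> trg (f i) = Y)"
  by auto

lemma arr_obj [simp]: "arr f \<Longrightarrow> src f \<in> qobj Q" "arr f \<Longrightarrow> trg f \<in> qobj Q"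
  using ax_typed by auto

lemma comp_typed [simp]:
  "arr f \<Longrightarrow> arr g \<Longrightarrow> trg f = src g \<Longrightarrow> arr (g \<cdot> f)"
  "arr f \<Longrightarrow> arr g \<Longrightarrow> trg f = src g \<Longrightarrow> src (g \<cdot> f) = src f"
  "arr f \<Longrightarrow> arr g \<Longrightarrow> trg f = src g \<Longrightarrow> trg (g \<cdot> f) = trg g"
  using ax_comp[rule_format, of "src f" "trg f" "trg g" f g] by auto

lemma id_typed [simp]:
  "X \<in> qobj Q \<Longrightarrow> arr (idq X)" "X \<in> qobj Q \<Longrightarrow> src (idq X) = X" "X \<in> qobj Q \<Longrightarrow> trg (idq X) = X"
  using ax_id by auto

lemma dual_typed [simp]:
  "arr f \<Longrightarrow> arr (f\<^sup>o)" "arr f \<Longrightarrow> src (f\<^sup>o) = trg f" "arr f \<Longrightarrow> trg (f\<^sup>o) = src f"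
  "arr f \<Longrightarrow> (f\<^sup>o)\<^sup>o = f"
  using ax_dual[rule_format, of "src f" "trg f" f] by auto

lemma comp_assoc:
  "arr f \<Longrightarrow> arr g \<Longrightarrow> arr h \<Longrightarrow> trg f = src g \<Longrightarrow> trg g = src h \<Longrightarrow> h \<cdot> (g \<cdot> f) = (h \<cdot> g) \<cdot> f"
  using ax_assoc[rule_format, of "src f" "trg f" "trg g" "trg h" f g h] by simp

lemma comp_id [simp]: "arr f \<Longrightarrow> trg f = Y \<Longrightarrow> idq Y \<cdot> f = f" "arr f \<Longrightarrow> src f = X \<Longrightarrow> f \<cdot> idq X = f"
  using ax_unit[rule_format, of "src f" "trg f" f] by auto

lemma dual_comp: "arr f \<Longrightarrow> arr g \<Longrightarrow> trg f = src g \<Longrightarrow> (g \<cdot> f)\<^sup>o = f\<^sup>o \<cdot> g\<^sup>o"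
  using ax_dual_comp[rule_format, of "src f" "trg f" "trg g" f g] by simp

lemma dual_id [simp]: "X \<in> qobj Q \<Longrightarrow> (idq X)\<^sup>o = idq X"
proof -
  assume X: "X \<in> qobj Q"
  have "idq X = ((idq X)\<^sup>o \<cdot> idq X)\<^sup>o" using X by simp
  also have "\<dots> = (idq X)\<^sup>o \<cdot> ((idq X)\<^sup>o)\<^sup>o" using X by (intro dual_comp) auto
  also have "\<dots> = (idq X)\<^sup>o" using X by simp
  finally show ?thesis by (rule sym)
qed

definition below (infix "\<sqsubseteq>" 50) where
  "f \<sqsubseteq> g \<longleftrightarrow> arr f \<and> arr g \<and> src f = src g \<and> trg f = trg g \<and> qle Q f g"

lemma belowD: "f \<sqsubseteq> g \<Longrightarrow> arr f" "f \<sqsubseteq> g \<Longrightarrow> arr g" "f \<sqsubseteq> g \<Longrightarrow> src f = src g" "f \<sqsubseteq> g \<Longrightarrow> trg f = trg g"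
  by (auto simp: below_def)

lemma
  assumes "X \<in> qobj Q" "Y \<in> qobj Q"
  shows qle_antisym_on: "\<forall>f\<in>qhom Q X Y. \<forall>g\<in>qhom Q X Y. qle Q f g \<and> qle Q g f \<longrightarrow> f = g"
    and qle_trans_on: "\<forall>f\<in>qhom Q X Y. \<forall>g\<in>qhom Q X Y. \<forall>h\<in>qhom Q X Y. qle Q f g \<and> qle Q g h \<longrightarrow> qle Q f h"
  using ax_order assms by blast+

lemma qle_refl [simp]: "arr f \<Longrightarrow> qle Q f f"
  using ax_order[rule_format, of "src f" "trg f"] by auto

lemma below_refl: "arr f \<Longrightarrow> f \<sqsubseteq> f"
  by (simp add: below_def)

lemma below_antisym: "f \<sqsubseteq> g \<Longrightarrow> g \<sqsubseteq> f \<Longrightarrow> f = g"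
  using qle_antisym_on[of "src f" "trg f"] by (simp add: below_def)

lemma below_trans [trans]: "f \<sqsubseteq> g \<Longrightarrow> g \<sqsubseteq> h \<Longrightarrow> f \<sqsubseteq> h"
  using qle_trans_on[of "src f" "trg f", rule_format, of f g h] unfolding below_def by auto

lemma Join_typed [simp]:
  "X \<in> qobj Q \<Longrightarrow> Y \<in> qobj Q \<Longrightarrow> S \<subseteq> qhom Q X Y \<Longrightarrow> arr (Join X Y S)"
  "X \<in> qobj Q \<Longrightarrow> Y \<in> qobj Q \<Longrightarrow> S \<subseteq> qhom Q X Y \<Longrightarrow> src (Join X Y S) = X"
  "X \<in> qobj Q \<Longrightarrow> Y \<in> qobj Q \<Longrightarrow> S \<subseteq> qhom Q X Y \<Longrightarrow> trg (Join X Y S) = Y"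
  using ax_join by auto

lemma Join_upper: "X \<in> qobj Q \<Longrightarrow> Y \<in> qobj Q \<Longrightarrow> S \<subseteq> qhom Q X Y \<Longrightarrow> s \<in> S \<Longrightarrow> s \<sqsubseteq> Join X Y S"
  using ax_join by (auto simp: below_def)

lemma Join_least:
  "X \<in> qobj Q \<Longrightarrow> Y \<in> qobj Q \<Longrightarrow> S \<subseteq> qhom Q X Y \<Longrightarrow> (\<And>s. s \<in> S \<Longrightarrow> s \<sqsubseteq> u) \<Longrightarrow>
   arr u \<Longrightarrow> src u = X \<Longrightarrow> trg u = Y \<Longrightarrow> Join X Y S \<sqsubseteq> u"
  using ax_join by (auto simp: below_def)

lemma Join_singleton: "arr f \<Longrightarrow> src f = X \<Longrightarrow> trg f = Y \<Longrightarrow> Join X Y {f} = f"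
  using Join_least[of X Y "{f}" f] Join_upper[of X Y "{f}" f] below_refl[of f]
  by (auto intro: below_antisym)

lemma Join_pair: "f \<sqsubseteq> g \<Longrightarrow> Join (src f) (trg f) {f, g} = g"
proof (rule below_antisym)
  assume fg: "f \<sqsubseteq> g"
  note g = belowD[OF fg]
  show "Join (src f) (trg f) {f, g} \<sqsubseteq> g"
    using fg g by (intro Join_least) (auto intro: below_refl)
  show "g \<sqsubseteq> Join (src f) (trg f) {f, g}"
    using g by (intro Join_upper) auto
qed

lemma comp_Join_left:
  "arr f \<Longrightarrow> Z \<in> qobj Q \<Longrightarrow> S \<subseteq> qhom Q (trg f) Z \<Longrightarrow> Join (trg f) Z S \<cdot> f = Join (src f) Z ((\<lambda>g. g \<cdot> f) ` S)"
  using ax_distrib[rule_format, of "src f" "trg f" Z] by auto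

lemma comp_Join_right:
  "arr g \<Longrightarrow> X \<in> qobj Q \<Longrightarrow> S \<subseteq> qhom Q X (src g) \<Longrightarrow> g \<cdot> Join X (src g) S = Join X (trg g) ((\<lambda>f. g \<cdot> f) ` S)"
  using ax_distrib[rule_format, of X "src g" "trg g"] by auto

text \<open>Monotonicity of composition comes from distributivity over the join of \<open>{f, f'}\<close>.\<close>

lemma comp_mono_right: "f \<sqsubseteq> f' \<Longrightarrow> arr g \<Longrightarrow> trg f = src g \<Longrightarrow> g \<cdot> f \<sqsubseteq> g \<cdot> f'"
  using comp_Join_right[of g "src f" "{f, f'}"] Join_pair[of f f']
    Join_upper[of "src f" "trg g" "(\<lambda>f. g \<cdot> f) ` {f, f'}" "g \<cdot> f"]
  by (auto simp: belowD)

lemma comp_mono_left: "f \<sqsubseteq> f' \<Longrightarrow> arr g \<Longrightarrow> trg g = src f \<Longrightarrow> f \<cdot> g \<sqsubseteq> f' \<cdot> g"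
  using comp_Join_left[of g "trg f" "{f, f'}"] Join_pair[of f f']
    Join_upper[of "src g" "trg f" "(\<lambda>f. f \<cdot> g) ` {f, f'}" "f \<cdot> g"]
  by (auto simp: belowD)

lemma comp_mono: "f \<sqsubseteq> f' \<Longrightarrow> g \<sqsubseteq> g' \<Longrightarrow> trg f = src g \<Longrightarrow> g \<cdot> f \<sqsubseteq> g' \<cdot> f'"
  by (metis belowD comp_mono_left comp_mono_right below_trans)

lemma dual_mono: "f \<sqsubseteq> g \<Longrightarrow> f\<^sup>o \<sqsubseteq> g\<^sup>o"
  using ax_dual_mono[rule_format, of "src f" "trg f" f g] by (auto simp: below_def)

lemma dual_mono_iff: "arr f \<Longrightarrow> arr g \<Longrightarrow> f\<^sup>o \<sqsubseteq> g\<^sup>o \<longleftrightarrow> f \<sqsubseteq> g"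
  using dual_mono[of "f\<^sup>o" "g\<^sup>o"] dual_mono[of f g] by auto

lemma below_dual_iff: "arr f \<Longrightarrow> arr g \<Longrightarrow> f \<sqsubseteq> g\<^sup>o \<longleftrightarrow> f\<^sup>o \<sqsubseteq> g"
  using dual_mono_iff[of f "g\<^sup>o"] by simp

lemma dual_Join: "X \<in> qobj Q \<Longrightarrow> Y \<in> qobj Q \<Longrightarrow> S \<subseteq> qhom Q X Y \<Longrightarrow> (Join X Y S)\<^sup>o = Join Y X (qinv Q ` S)"
proof (rule below_antisym)
  assume XY: "X \<in> qobj Q" "Y \<in> qobj Q" and S: "S \<subseteq> qhom Q X Y"
  then have S': "qinv Q ` S \<subseteq> qhom Q Y X" by auto
  have "s\<^sup>o \<sqsubseteq> Join Y X (qinv Q ` S)" if "s \<in> S" for s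
    using XY S' that by (intro Join_upper) auto
  then have "Join X Y S \<sqsubseteq> (Join Y X (qinv Q ` S))\<^sup>o"
    using XY S S' by (intro Join_least) (auto simp: below_dual_iff)
  then show "(Join X Y S)\<^sup>o \<sqsubseteq> Join Y X (qinv Q ` S)"
    using XY S S' by (simp add: below_dual_iff[symmetric])
  have "s \<sqsubseteq> Join X Y S" if "s \<in> S" for s
    using XY S that by (intro Join_upper) auto
  then show "Join Y X (qinv Q ` S) \<sqsubseteq> (Join X Y S)\<^sup>o"
    using XY S S' by (intro Join_least) (auto intro: dual_mono)
qed

lemma Join_image_upper:
  "i \<in> I \<Longrightarrow> X \<in> qobj Q \<Longrightarrow> Y \<in> qobj Q \<Longrightarrow> (\<And>i. i \<in> I \<Longrightarrow> arr (f i) \<and> src (f i) = X \<and> trg (f i) = Y)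
   \<Longrightarrow> f i \<sqsubseteq> Join X Y (f ` I)"
  by (rule Join_upper) auto

lemma Join_image_least:
  "X \<in> qobj Q \<Longrightarrow> Y \<in> qobj Q \<Longrightarrow> (\<And>i. i \<in> I \<Longrightarrow> arr (f i) \<and> src (f i) = X \<and> trg (f i) = Y) \<Longrightarrow>
   arr u \<Longrightarrow> src u = X \<Longrightarrow> trg u = Y \<Longrightarrow> (\<And>i. i \<in> I \<Longrightarrow> f i \<sqsubseteq> u) \<Longrightarrow> Join X Y (f ` I) \<sqsubseteq> u"
  by (rule Join_least) auto

lemma Join_image_mono:
  assumes "X \<in> qobj Q" "Y \<in> qobj Q"
    and "\<And>i. i \<in> I \<Longrightarrow> arr (f i) \<and> src (f i) = X \<and> trg (f i) = Y"
    and "\<And>i. i \<in> I \<Longrightarrow> arr (g i) \<and> src (g i) = X \<and> trg (g i) = Y"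
    and "\<And>i. i \<in> I \<Longrightarrow> f i \<sqsubseteq> g i"
  shows "Join X Y (f ` I) \<sqsubseteq> Join X Y (g ` I)"
proof (rule Join_image_least)
  fix i assume i: "i \<in> I"
  have "g i \<sqsubseteq> Join X Y (g ` I)" by (rule Join_image_upper) (use assms i in auto)
  with assms(5)[OF i] show "f i \<sqsubseteq> Join X Y (g ` I)" by (rule below_trans)
qed (use assms in auto)

lemma comp_Join_image_right:
  "arr g \<Longrightarrow> X \<in> qobj Q \<Longrightarrow> src g = Y \<Longrightarrow> trg g = Z \<Longrightarrow>
   (\<And>i. i \<in> I \<Longrightarrow> arr (f i) \<and> src (f i) = X \<and> trg (f i) = Y) \<Longrightarrow>
   g \<cdot> Join X Y (f ` I) = Join X Z ((\<lambda>i. g \<cdot> f i) ` I)"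
  using comp_Join_right[of g X "f ` I"] by (auto simp: image_image)

lemma comp_Join_image_left:
  "arr g \<Longrightarrow> Z \<in> qobj Q \<Longrightarrow> trg g = Y \<Longrightarrow> src g = W \<Longrightarrow>
   (\<And>i. i \<in> I \<Longrightarrow> arr (f i) \<and> src (f i) = Y \<and> trg (f i) = Z) \<Longrightarrow>
   Join Y Z (f ` I) \<cdot> g = Join W Z ((\<lambda>i. f i \<cdot> g) ` I)"
  using comp_Join_left[of g Z "f ` I"] by (auto simp: image_image)

lemma comp_Join_Join_below:
  assumes "X \<in> qobj Q" "Y \<in> qobj Q" "Z \<in> qobj Q"
    and "\<And>i. i \<in> I \<Longrightarrow> arr (f i) \<and> src (f i) = Y \<and> trg (f i) = Z"
    and "\<And>k. k \<in> K \<Longrightarrow> arr (g k) \<and> src (g k) = X \<and> trg (g k) = Y"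
    and "arr u" "src u = X" "trg u = Z"
    and "\<And>i k. i \<in> I \<Longrightarrow> k \<in> K \<Longrightarrow> f i \<cdot> g k \<sqsubseteq> u"
  shows "Join Y Z (f ` I) \<cdot> Join X Y (g ` K) \<sqsubseteq> u"
proof -
  have "Join Y Z (f ` I) \<cdot> Join X Y (g ` K) = Join X Z ((\<lambda>i. f i \<cdot> Join X Y (g ` K)) ` I)"
    by (rule comp_Join_image_left) (use assms in auto)
  also have "\<dots> \<sqsubseteq> u"
  proof (rule Join_image_least)
    fix i assume i: "i \<in> I"
    have "f i \<cdot> Join X Y (g ` K) = Join X Z ((\<lambda>k. f i \<cdot> g k) ` K)"
      by (rule comp_Join_image_right) (use assms i in auto)
    also have "\<dots> \<sqsubseteq> u"
      by (rule Join_image_least) (use assms i in auto)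
    finally show "f i \<cdot> Join X Y (g ` K) \<sqsubseteq> u" .
  qed (use assms in auto)
  finally show ?thesis .
qed

lemma below_comp_unit_right: "idq X \<sqsubseteq> a \<Longrightarrow> arr f \<Longrightarrow> src f = X \<Longrightarrow> f \<sqsubseteq> f \<cdot> a"
  using comp_mono_right[of "idq X" a f] belowD[of "idq X" a] by auto

lemma below_comp_unit_left: "idq X \<sqsubseteq> a \<Longrightarrow> arr f \<Longrightarrow> trg f = X \<Longrightarrow> f \<sqsubseteq> a \<cdot> f"
  using comp_mono_left[of "idq X" a f] belowD[of "idq X" a] by auto

lemma
  assumes "arr a" "arr b" "src a = X" "src b = X" "trg a = Y" "trg b = Y"
  shows qmeet_typed: "arr (qmeet Q X Y a b)" "src (qmeet Q X Y a b) = X" "trg (qmeet Q X Y a b) = Y"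
    and qmeet_lower: "qmeet Q X Y a b \<sqsubseteq> a" "qmeet Q X Y a b \<sqsubseteq> b"
    and qmeet_greatest: "c \<sqsubseteq> a \<Longrightarrow> c \<sqsubseteq> b \<Longrightarrow> c \<sqsubseteq> qmeet Q X Y a b"
proof -
  let ?S = "{c \<in> qhom Q X Y. qle Q c a \<and> qle Q c b}"
  have XY: "X \<in> qobj Q" "Y \<in> qobj Q" and S: "?S \<subseteq> qhom Q X Y" using assms by auto
  show "arr (qmeet Q X Y a b)" "src (qmeet Q X Y a b) = X" "trg (qmeet Q X Y a b) = Y"
    unfolding qmeet_def using XY S by auto
  show "qmeet Q X Y a b \<sqsubseteq> a" "qmeet Q X Y a b \<sqsubseteq> b"
    unfolding qmeet_def by (rule Join_least[OF XY S]; use assms in \<open>auto simp: below_def\<close>)+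
  show "c \<sqsubseteq> a \<Longrightarrow> c \<sqsubseteq> b \<Longrightarrow> c \<sqsubseteq> qmeet Q X Y a b"
    unfolding qmeet_def by (rule Join_upper[OF XY S]) (use assms in \<open>auto simp: below_def\<close>)
qed

section \<open>Q-categories and symmetrisation\<close>

definition typed_qcat :: "('a, 'o, 'm) qcat \<Rightarrow> bool" where
  "typed_qcat A \<longleftrightarrow> (\<forall>x\<in>cobj A. ctype A x \<in> qobj Q)
     \<and> (\<forall>x\<in>cobj A. \<forall>y\<in>cobj A. chom A y x \<in> qhom Q (ctype A x) (ctype A y))"

lemma typed_qcatD [simp]:
  "typed_qcat A \<Longrightarrow> x \<in> cobj A \<Longrightarrow> ctype A x \<in> qobj Q"
  "typed_qcat A \<Longrightarrow> x \<in> cobj A \<Longrightarrow> y \<in> cobj A \<Longrightarrow> arr (chom A y x)"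
  "typed_qcat A \<Longrightarrow> x \<in> cobj A \<Longrightarrow> y \<in> cobj A \<Longrightarrow> src (chom A y x) = ctype A x"
  "typed_qcat A \<Longrightarrow> x \<in> cobj A \<Longrightarrow> y \<in> cobj A \<Longrightarrow> trg (chom A y x) = ctype A y"
  by (auto simp: typed_qcat_def)

lemma qcat_typed: "qcat Q A \<Longrightarrow> typed_qcat A"
  unfolding qcat_def typed_qcat_def by (elim conjE) (intro conjI; assumption)

lemma qcat_comp_below:
  "qcat Q A \<Longrightarrow> x \<in> cobj A \<Longrightarrow> y \<in> cobj A \<Longrightarrow> z \<in> cobj A \<Longrightarrow> chom A z y \<cdot> chom A y x \<sqsubseteq> chom A z x"
  using qcat_typed[of A] unfolding qcat_def below_def by (elim conjE) simp

lemma qcat_id_below: "qcat Q A \<Longrightarrow> x \<in> cobj A \<Longrightarrow> idq (ctype A x) \<sqsubseteq> chom A x x"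
  using qcat_typed[of A] unfolding qcat_def below_def by (elim conjE) simp

lemma symz_simps [simp]:
  "cobj (symz Q A) = cobj A" "ctype (symz Q A) = ctype A"
  "chom (symz Q A) y x = qmeet Q (ctype A x) (ctype A y) (chom A y x) ((chom A x y)\<^sup>o)"
  by (auto simp: symz_def)

lemma
  assumes "typed_qcat A" "x \<in> cobj A" "y \<in> cobj A"
  shows symz_hom_typed: "arr (chom (symz Q A) y x)" "src (chom (symz Q A) y x) = ctype A x"
      "trg (chom (symz Q A) y x) = ctype A y"
    and symz_hom_below: "chom (symz Q A) y x \<sqsubseteq> chom A y x" "chom (symz Q A) y x \<sqsubseteq> (chom A x y)\<^sup>o"
    and symz_hom_greatest: "c \<sqsubseteq> chom A y x \<Longrightarrow> c \<sqsubseteq> (chom A x y)\<^sup>o \<Longrightarrow> c \<sqsubseteq> chom (symz Q A) y x"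
  using assms by (simp_all add: qmeet_typed qmeet_lower qmeet_greatest)

lemma typed_symz: "typed_qcat A \<Longrightarrow> typed_qcat (symz Q A)"
  unfolding typed_qcat_def[of "symz Q A"] using symz_hom_typed[of A] by simp

lemma symz_id_below:
  assumes A: "qcat Q A" and x: "x \<in> cobj A"
  shows "idq (ctype A x) \<sqsubseteq> chom (symz Q A) x x"
proof -
  have "idq (ctype A x) \<sqsubseteq> (chom A x x)\<^sup>o"
    using dual_mono[OF qcat_id_below[OF A x]] qcat_typed[OF A] x by simp
  then show ?thesis using symz_hom_greatest[OF qcat_typed[OF A] x x] qcat_id_below[OF A x] by simp
qed

section \<open>Presheaf adjunctions\<close>

definition presheaf :: "('a, 'o, 'm) qcat \<Rightarrow> 'o \<Rightarrow> ('a \<Rightarrow> 'm) \<Rightarrow> bool" where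
  "presheaf A X \<phi> \<longleftrightarrow> X \<in> qobj Q
     \<and> (\<forall>y\<in>cobj A. arr (\<phi> y) \<and> src (\<phi> y) = X \<and> trg (\<phi> y) = ctype A y)
     \<and> (\<forall>y\<in>cobj A. \<forall>y'\<in>cobj A. chom A y' y \<cdot> \<phi> y \<sqsubseteq> \<phi> y')"

definition copresheaf :: "('a, 'o, 'm) qcat \<Rightarrow> 'o \<Rightarrow> ('a \<Rightarrow> 'm) \<Rightarrow> bool" where
  "copresheaf A X \<rho> \<longleftrightarrow> X \<in> qobj Q
     \<and> (\<forall>y\<in>cobj A. arr (\<rho> y) \<and> src (\<rho> y) = ctype A y \<and> trg (\<rho> y) = X)
     \<and> (\<forall>y\<in>cobj A. \<forall>y'\<in>cobj A. \<rho> y \<cdot> chom A y y' \<sqsubseteq> \<rho> y')"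

text \<open>A left adjoint presheaf \<open>\<phi> : *\<^sub>X \<rightarrow> A\<close> together with its right adjoint \<open>\<rho> : A \<rightarrow> *\<^sub>X\<close>,
  both given by their families of elements.\<close>

definition presheaf_adjunction :: "('a, 'o, 'm) qcat \<Rightarrow> 'o \<Rightarrow> ('a \<Rightarrow> 'm) \<Rightarrow> ('a \<Rightarrow> 'm) \<Rightarrow> bool" where
  "presheaf_adjunction A X \<phi> \<rho> \<longleftrightarrow> presheaf A X \<phi> \<and> copresheaf A X \<rho>
     \<and> idq X \<sqsubseteq> Join X X ((\<lambda>y. \<rho> y \<cdot> \<phi> y) ` cobj A)
     \<and> (\<forall>y\<in>cobj A. \<forall>y'\<in>cobj A. \<phi> y' \<cdot> \<rho> y \<sqsubseteq> chom A y' y)"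

abbreviation sym_adjunction where
  "sym_adjunction A X \<phi> \<equiv> presheaf_adjunction A X \<phi> (\<lambda>y. (\<phi> y)\<^sup>o)"

lemma presheaf_adjunctionD:
  assumes "presheaf_adjunction A X \<phi> \<rho>"
  shows "X \<in> qobj Q"
    and "\<And>y. y \<in> cobj A \<Longrightarrow> arr (\<phi> y)" "\<And>y. y \<in> cobj A \<Longrightarrow> src (\<phi> y) = X"
      "\<And>y. y \<in> cobj A \<Longrightarrow> trg (\<phi> y) = ctype A y"
    and "\<And>y y'. y \<in> cobj A \<Longrightarrow> y' \<in> cobj A \<Longrightarrow> chom A y' y \<cdot> \<phi> y \<sqsubseteq> \<phi> y'"
    and "\<And>y. y \<in> cobj A \<Longrightarrow> arr (\<rho> y)" "\<And>y. y \<in> cobj A \<Longrightarrow> src (\<rho> y) = ctype A y"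
      "\<And>y. y \<in> cobj A \<Longrightarrow> trg (\<rho> y) = X"
    and "\<And>y y'. y \<in> cobj A \<Longrightarrow> y' \<in> cobj A \<Longrightarrow> \<rho> y \<cdot> chom A y y' \<sqsubseteq> \<rho> y'"
    and "idq X \<sqsubseteq> Join X X ((\<lambda>y. \<rho> y \<cdot> \<phi> y) ` cobj A)"
    and "\<And>y y'. y \<in> cobj A \<Longrightarrow> y' \<in> cobj A \<Longrightarrow> \<phi> y' \<cdot> \<rho> y \<sqsubseteq> chom A y' y"
  using assms unfolding presheaf_adjunction_def presheaf_def copresheaf_def by auto

lemma left_adjoint_to_unit_cat_iff:
  assumes "typed_qcat A" "X \<in> qobj Q"
  shows "left_adjoint_to Q (unit_cat Q X) A (as_dist \<phi>) \<Psi> \<longleftrightarrow> presheaf_adjunction A X \<phi> (\<Psi> ())"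
proof (cases "(\<forall>y\<in>cobj A. arr (\<phi> y) \<and> src (\<phi> y) = X \<and> trg (\<phi> y) = ctype A y)
    \<and> (\<forall>y\<in>cobj A. arr (\<Psi> () y) \<and> src (\<Psi> () y) = ctype A y \<and> trg (\<Psi> () y) = X)")
  case True
  then show ?thesis
    unfolding left_adjoint_to_def distributor_def dcomp_def presheaf_adjunction_def
      presheaf_def copresheaf_def
    by (simp add: unit_cat_def as_dist_def below_def Join_singleton assms)
next
  case False
  then show ?thesis
    unfolding left_adjoint_to_def distributor_def presheaf_adjunction_def presheaf_def copresheaf_def
    by (auto simp: unit_cat_def as_dist_def)
qed

lemma left_adj_presheaf_iff:
  assumes "typed_qcat A" "X \<in> qobj Q"
  shows "left_adj_presheaf Q A X \<phi> \<longleftrightarrow> (\<exists>\<rho>. presheaf_adjunction A X \<phi> \<rho>)"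
proof
  assume "left_adj_presheaf Q A X \<phi>"
  then obtain \<Psi> where "left_adjoint_to Q (unit_cat Q X) A (as_dist \<phi>) \<Psi>"
    unfolding left_adj_presheaf_def by blast
  then show "\<exists>\<rho>. presheaf_adjunction A X \<phi> \<rho>"
    using left_adjoint_to_unit_cat_iff[OF assms] by blast
next
  assume "\<exists>\<rho>. presheaf_adjunction A X \<phi> \<rho>"
  then obtain \<rho> where "presheaf_adjunction A X \<phi> \<rho>" by blast
  then have "left_adjoint_to Q (unit_cat Q X) A (as_dist \<phi>) (\<lambda>_. \<rho>)"
    using left_adjoint_to_unit_cat_iff[OF assms] by simp
  then show "left_adj_presheaf Q A X \<phi>" unfolding left_adj_presheaf_def by blast
qed

definition right_adjoint where
  "right_adjoint A p = right_adj Q A (fst p) (snd p) ()"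

lemma cc_hom_right_adjoint:
  "cc_hom Q A p q = Join (fst q) (fst p) ((\<lambda>y. right_adjoint A p y \<cdot> snd q y) ` cobj A)"
  unfolding cc_hom_def dcomp_def unit_cat_def as_dist_def right_adjoint_def by simp

lemma right_adjoint_adjunction:
  "typed_qcat A \<Longrightarrow> fst p \<in> qobj Q \<Longrightarrow> left_adj_presheaf Q A (fst p) (snd p) \<Longrightarrow>
   presheaf_adjunction A (fst p) (snd p) (right_adjoint A p)"
  unfolding left_adj_presheaf_def right_adj_def right_adjoint_def
  by (metis left_adjoint_to_unit_cat_iff someI_ex)

lemma sym_left_adj_presheaf_adjunction:
  "typed_qcat A \<Longrightarrow> X \<in> qobj Q \<Longrightarrow> sym_left_adj_presheaf Q A X \<phi> \<Longrightarrow>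
   presheaf_adjunction A X \<phi> (\<lambda>y. (\<phi> y)\<^sup>o)"
  unfolding sym_left_adj_presheaf_def
  using left_adjoint_to_unit_cat_iff[of A X \<phi> "dual_dist Q (as_dist \<phi>)"]
  by (simp add: dual_dist_def as_dist_def)

lemma presheaf_adjunction_right_below:
  assumes A: "typed_qcat A" and adj: "presheaf_adjunction A X \<phi> \<rho>"
    and adj': "presheaf_adjunction A X \<phi> \<rho>'" and a: "a \<in> cobj A"
  shows "\<rho>' a \<sqsubseteq> \<rho> a"
proof -
  note R = presheaf_adjunctionD[OF adj] and R' = presheaf_adjunctionD[OF adj']
  have "\<rho>' a = idq X \<cdot> \<rho>' a" using R' a by simp
  also have "\<dots> \<sqsubseteq> Join X X ((\<lambda>y. \<rho> y \<cdot> \<phi> y) ` cobj A) \<cdot> \<rho>' a"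
    by (rule comp_mono_left[OF R(10)]) (use R' a in auto)
  also have "\<dots> = Join (ctype A a) X ((\<lambda>y. (\<rho> y \<cdot> \<phi> y) \<cdot> \<rho>' a) ` cobj A)"
    by (rule comp_Join_image_left) (use R R' a in auto)
  also have "\<dots> \<sqsubseteq> \<rho> a"
  proof (rule Join_image_least)
    fix y assume y: "y \<in> cobj A"
    have "(\<rho> y \<cdot> \<phi> y) \<cdot> \<rho>' a = \<rho> y \<cdot> (\<phi> y \<cdot> \<rho>' a)"
      using R R' a y A by (simp add: comp_assoc)
    also have "\<dots> \<sqsubseteq> \<rho> y \<cdot> chom A y a"
      by (rule comp_mono_right[OF R'(11)]) (use R R' a y A in auto)
    also have "\<dots> \<sqsubseteq> \<rho> a" using R(9) a y by auto
    finally show "(\<rho> y \<cdot> \<phi> y) \<cdot> \<rho>' a \<sqsubseteq> \<rho> a" .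
  qed (use R R' a A in auto)
  finally show ?thesis .
qed

lemma presheaf_adjunction_right_unique:
  "typed_qcat A \<Longrightarrow> presheaf_adjunction A X \<phi> \<rho> \<Longrightarrow> presheaf_adjunction A X \<phi> \<rho>' \<Longrightarrow> a \<in> cobj A \<Longrightarrow>
   \<rho> a = \<rho>' a"
  by (meson below_antisym presheaf_adjunction_right_below)

lemma cc_hom_eq:
  assumes A: "typed_qcat A" and adj: "presheaf_adjunction A (fst p) (snd p) \<rho>"
  shows "cc_hom Q A p q = Join (fst q) (fst p) ((\<lambda>y. \<rho> y \<cdot> snd q y) ` cobj A)"
proof -
  have X: "fst p \<in> qobj Q" using presheaf_adjunctionD(1)[OF adj] .
  have "left_adj_presheaf Q A (fst p) (snd p)"
    using adj left_adj_presheaf_iff[OF A X] by blast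
  then have "\<And>y. y \<in> cobj A \<Longrightarrow> right_adjoint A p y = \<rho> y"
    using presheaf_adjunction_right_unique[OF A right_adjoint_adjunction[OF A X] adj] by blast
  then show ?thesis unfolding cc_hom_right_adjoint by (simp cong: image_cong)
qed

lemma presheaf_Join:
  assumes A: "typed_qcat A" and X: "X \<in> qobj Q"
    and \<phi>: "\<And>i. i \<in> I \<Longrightarrow> presheaf A (Y i) (\<phi> i)"
    and g: "\<And>i. i \<in> I \<Longrightarrow> arr (g i) \<and> src (g i) = X \<and> trg (g i) = Y i"
    and \<psi>: "\<And>b. b \<in> cobj A \<Longrightarrow> \<psi> b = Join X (ctype A b) ((\<lambda>i. \<phi> i b \<cdot> g i) ` I)"
  shows "presheaf A X \<psi>"
proof -
  have \<phi>_typed: "arr (\<phi> i b) \<and> src (\<phi> i b) = Y i \<and> trg (\<phi> i b) = ctype A b"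
    if "i \<in> I" "b \<in> cobj A" for i b
    using \<phi>[OF that(1)] that(2) unfolding presheaf_def by auto
  have "chom A b' b \<cdot> \<psi> b \<sqsubseteq> \<psi> b'" if b: "b \<in> cobj A" and b': "b' \<in> cobj A" for b b'
  proof -
    have "chom A b' b \<cdot> \<psi> b = Join X (ctype A b') ((\<lambda>i. chom A b' b \<cdot> (\<phi> i b \<cdot> g i)) ` I)"
      unfolding \<psi>[OF b] by (rule comp_Join_image_right) (use A X b b' g \<phi>_typed in auto)
    also have "\<dots> \<sqsubseteq> \<psi> b'" unfolding \<psi>[OF b']
    proof (rule Join_image_mono)
      fix i assume i: "i \<in> I"
      have law: "chom A b' b \<cdot> \<phi> i b \<sqsubseteq> \<phi> i b'"
        using \<phi>[OF i] b b' unfolding presheaf_def by auto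
      have "chom A b' b \<cdot> (\<phi> i b \<cdot> g i) = (chom A b' b \<cdot> \<phi> i b) \<cdot> g i"
        using A b b' g[OF i] \<phi>_typed[OF i b] by (simp add: comp_assoc)
      also have "\<dots> \<sqsubseteq> \<phi> i b' \<cdot> g i"
        by (rule comp_mono_left[OF law]) (use A b b' g[OF i] \<phi>_typed[OF i b] in auto)
      finally show "chom A b' b \<cdot> (\<phi> i b \<cdot> g i) \<sqsubseteq> \<phi> i b' \<cdot> g i" .
    qed (use A X b b' g \<phi>_typed in auto)
    finally show ?thesis .
  qed
  then show ?thesis unfolding presheaf_def using A X \<psi> g \<phi>_typed by auto
qed

lemma copresheaf_Join:
  assumes A: "typed_qcat A" and X: "X \<in> qobj Q"
    and \<rho>: "\<And>i. i \<in> I \<Longrightarrow> copresheaf A (Y i) (\<rho> i)"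
    and h: "\<And>i. i \<in> I \<Longrightarrow> arr (h i) \<and> src (h i) = Y i \<and> trg (h i) = X"
    and \<sigma>: "\<And>b. b \<in> cobj A \<Longrightarrow> \<sigma> b = Join (ctype A b) X ((\<lambda>i. h i \<cdot> \<rho> i b) ` I)"
  shows "copresheaf A X \<sigma>"
proof -
  have \<rho>_typed: "arr (\<rho> i b) \<and> src (\<rho> i b) = ctype A b \<and> trg (\<rho> i b) = Y i"
    if "i \<in> I" "b \<in> cobj A" for i b
    using \<rho>[OF that(1)] that(2) unfolding copresheaf_def by auto
  have "\<sigma> b \<cdot> chom A b b' \<sqsubseteq> \<sigma> b'" if b: "b \<in> cobj A" and b': "b' \<in> cobj A" for b b'
  proof -
    have "\<sigma> b \<cdot> chom A b b' = Join (ctype A b') X ((\<lambda>i. (h i \<cdot> \<rho> i b) \<cdot> chom A b b') ` I)"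
      unfolding \<sigma>[OF b] by (rule comp_Join_image_left) (use A X b b' h \<rho>_typed in auto)
    also have "\<dots> \<sqsubseteq> \<sigma> b'" unfolding \<sigma>[OF b']
    proof (rule Join_image_mono)
      fix i assume i: "i \<in> I"
      have law: "\<rho> i b \<cdot> chom A b b' \<sqsubseteq> \<rho> i b'"
        using \<rho>[OF i] b b' unfolding copresheaf_def by auto
      have "(h i \<cdot> \<rho> i b) \<cdot> chom A b b' = h i \<cdot> (\<rho> i b \<cdot> chom A b b')"
        using A b b' h[OF i] \<rho>_typed[OF i b] by (simp add: comp_assoc)
      also have "\<dots> \<sqsubseteq> h i \<cdot> \<rho> i b'"
        by (rule comp_mono_right[OF law]) (use A b b' h[OF i] \<rho>_typed[OF i b] in auto)
      finally show "(h i \<cdot> \<rho> i b) \<cdot> chom A b b' \<sqsubseteq> h i \<cdot> \<rho> i b'" .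
    qed (use A X b b' h \<rho>_typed in auto)
    finally show ?thesis .
  qed
  then show ?thesis unfolding copresheaf_def using A X \<sigma> h \<rho>_typed by auto
qed

lemma representable_presheaf: "qcat Q A \<Longrightarrow> y \<in> cobj A \<Longrightarrow> presheaf A (ctype A y) (\<lambda>b. chom A b y)"
  using qcat_typed[of A] qcat_comp_below[of A y] unfolding presheaf_def by auto

lemma representable_copresheaf: "qcat Q A \<Longrightarrow> y \<in> cobj A \<Longrightarrow> copresheaf A (ctype A y) (\<lambda>b. chom A y b)"
  using qcat_typed[of A] qcat_comp_below[of A _ _ y] unfolding copresheaf_def by auto

lemma Join_comp_Join_absorb:
  assumes X: "X \<in> qobj Q" and Z: "Z \<in> qobj Q"
    and \<phi>: "\<And>y. y \<in> I \<Longrightarrow> arr (\<phi> y) \<and> src (\<phi> y) = X \<and> trg (\<phi> y) = T y"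
    and k: "\<And>a. a \<in> K \<Longrightarrow> arr (k a) \<and> src (k a) = S a \<and> trg (k a) = Z"
    and m: "\<And>a y. a \<in> K \<Longrightarrow> y \<in> I \<Longrightarrow> arr (m a y) \<and> src (m a y) = T y \<and> trg (m a y) = S a"
    and n: "\<And>y. y \<in> I \<Longrightarrow> arr (n y) \<and> src (n y) = T y \<and> trg (n y) = Z"
    and absorb: "\<And>a y. a \<in> K \<Longrightarrow> y \<in> I \<Longrightarrow> k a \<cdot> m a y \<sqsubseteq> n y"
    and cover: "\<And>y. y \<in> I \<Longrightarrow> \<exists>a\<in>K. n y \<sqsubseteq> k a \<cdot> m a y"
  shows "Join X Z ((\<lambda>a. k a \<cdot> Join X (S a) ((\<lambda>y. m a y \<cdot> \<phi> y) ` I)) ` K)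
       = Join X Z ((\<lambda>y. n y \<cdot> \<phi> y) ` I)"
proof (rule below_antisym)
  have S: "S a \<in> qobj Q" if "a \<in> K" for a using k[OF that] by (metis arr_obj(1))
  show "Join X Z ((\<lambda>a. k a \<cdot> Join X (S a) ((\<lambda>y. m a y \<cdot> \<phi> y) ` I)) ` K)
      \<sqsubseteq> Join X Z ((\<lambda>y. n y \<cdot> \<phi> y) ` I)"
  proof (rule Join_image_least)
    fix a assume a: "a \<in> K"
    have "k a \<cdot> Join X (S a) ((\<lambda>y. m a y \<cdot> \<phi> y) ` I) = Join X Z ((\<lambda>y. k a \<cdot> (m a y \<cdot> \<phi> y)) ` I)"
      by (rule comp_Join_image_right) (use X \<phi> k m a in auto)
    also have "\<dots> \<sqsubseteq> Join X Z ((\<lambda>y. n y \<cdot> \<phi> y) ` I)"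
    proof (rule Join_image_mono)
      fix y assume y: "y \<in> I"
      have "k a \<cdot> (m a y \<cdot> \<phi> y) = (k a \<cdot> m a y) \<cdot> \<phi> y"
        using \<phi> k m a y by (simp add: comp_assoc)
      also have "\<dots> \<sqsubseteq> n y \<cdot> \<phi> y"
        by (rule comp_mono_left[OF absorb[OF a y]]) (use \<phi> k m a y in auto)
      finally show "k a \<cdot> (m a y \<cdot> \<phi> y) \<sqsubseteq> n y \<cdot> \<phi> y" .
    qed (use X Z \<phi> k m n a in auto)
    finally show "k a \<cdot> Join X (S a) ((\<lambda>y. m a y \<cdot> \<phi> y) ` I) \<sqsubseteq> Join X Z ((\<lambda>y. n y \<cdot> \<phi> y) ` I)" .
  qed (use X Z S \<phi> k m n in auto)
  show "Join X Z ((\<lambda>y. n y \<cdot> \<phi> y) ` I)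
      \<sqsubseteq> Join X Z ((\<lambda>a. k a \<cdot> Join X (S a) ((\<lambda>y. m a y \<cdot> \<phi> y) ` I)) ` K)"
  proof (rule Join_image_least)
    fix y assume y: "y \<in> I"
    obtain a where a: "a \<in> K" and cov: "n y \<sqsubseteq> k a \<cdot> m a y" using cover[OF y] by blast
    have "n y \<cdot> \<phi> y \<sqsubseteq> (k a \<cdot> m a y) \<cdot> \<phi> y"
      by (rule comp_mono_left[OF cov]) (use \<phi> n y in auto)
    also have "\<dots> = k a \<cdot> (m a y \<cdot> \<phi> y)"
      using \<phi> k m a y by (simp add: comp_assoc)
    also have "\<dots> \<sqsubseteq> k a \<cdot> Join X (S a) ((\<lambda>y. m a y \<cdot> \<phi> y) ` I)"
      by (rule comp_mono_right[OF Join_image_upper[OF y]]) (use X S \<phi> k m a y in auto)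
    also have "\<dots> \<sqsubseteq> Join X Z ((\<lambda>a. k a \<cdot> Join X (S a) ((\<lambda>y. m a y \<cdot> \<phi> y) ` I)) ` K)"
      by (rule Join_image_upper[OF a]) (use X Z S \<phi> k m in auto)
    finally show "n y \<cdot> \<phi> y \<sqsubseteq> Join X Z ((\<lambda>a. k a \<cdot> Join X (S a) ((\<lambda>y. m a y \<cdot> \<phi> y) ` I)) ` K)" .
  qed (use X Z S \<phi> k m n in auto)
qed

lemma sym_adjunction_below:
  assumes C: "typed_qcat C" and \<Phi>: "sym_adjunction C X \<Phi>" and p: "p \<in> cobj C"
    and u: "arr u" "src u = X" "trg u = ctype C p"
    and bound: "\<And>p'. p' \<in> cobj C \<Longrightarrow> u \<cdot> (\<Phi> p')\<^sup>o \<sqsubseteq> chom C p p'"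
  shows "u \<sqsubseteq> \<Phi> p"
proof -
  note T = presheaf_adjunctionD[OF \<Phi>]
  have "u = u \<cdot> idq X" using u by simp
  also have "\<dots> \<sqsubseteq> u \<cdot> Join X X ((\<lambda>p'. (\<Phi> p')\<^sup>o \<cdot> \<Phi> p') ` cobj C)"
    by (rule comp_mono_right[OF T(10)]) (use u T in auto)
  also have "\<dots> = Join X (ctype C p) ((\<lambda>p'. u \<cdot> ((\<Phi> p')\<^sup>o \<cdot> \<Phi> p')) ` cobj C)"
    by (rule comp_Join_image_right) (use u T in auto)
  also have "\<dots> \<sqsubseteq> \<Phi> p"
  proof (rule Join_image_least)
    fix p' assume p': "p' \<in> cobj C"
    have "u \<cdot> ((\<Phi> p')\<^sup>o \<cdot> \<Phi> p') = (u \<cdot> (\<Phi> p')\<^sup>o) \<cdot> \<Phi> p'"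
      using u T p' by (simp add: comp_assoc)
    also have "\<dots> \<sqsubseteq> chom C p p' \<cdot> \<Phi> p'"
      by (rule comp_mono_left[OF bound[OF p']]) (use u T p' in auto)
    also have "\<dots> \<sqsubseteq> \<Phi> p" by (rule T(5)[OF p' p])
    finally show "u \<cdot> ((\<Phi> p')\<^sup>o \<cdot> \<Phi> p') \<sqsubseteq> \<Phi> p" .
  qed (use u T p C in auto)
  finally show ?thesis .
qed

section \<open>The embedding \<open>L\<^sub>A\<close>\<close>

lemma pres_comp_eq:
  "pres_comp Q A B \<Phi> p = (fst p, (\<lambda>b. if b \<in> cobj B
     then Join (fst p) (ctype B b) ((\<lambda>y. \<Phi> b y \<cdot> snd p y) ` cobj A) else undefined))"
  unfolding pres_comp_def dcomp_def unit_cat_def as_dist_def by (simp cong: if_cong)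

definition L_presheaf where
  "L_presheaf A X \<phi> = (\<lambda>b. if b \<in> cobj A
     then Join X (ctype A b) ((\<lambda>y. chom A b y \<cdot> \<phi> y) ` cobj A) else undefined)"

definition L_copresheaf where
  "L_copresheaf A X \<phi> = (\<lambda>b. Join (ctype A b) X ((\<lambda>y. (\<phi> y)\<^sup>o \<cdot> chom A y b) ` cobj A))"

lemma Lmap_eq: "Lmap Q A p = (fst p, L_presheaf A (fst p) (snd p))"
  unfolding Lmap_def pres_comp_eq L_presheaf_def by (simp cong: if_cong)

text \<open>For symmetric left adjoint presheaves \<open>\<phi> : *\<^sub>X \<rightarrow> A\<^sub>s\<close> and \<open>\<psi> : *\<^sub>Y \<rightarrow> A\<^sub>s\<close>, \<open>sym_hom A Y \<psi> X \<phi>\<close>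
  is \<open>\<psi>\<^sup>o \<otimes> \<phi>\<close>, the hom of \<open>(A\<^sub>s)\<^sub>s\<^sub>c\<close>, while \<open>L_hom A Y \<psi> X \<phi>\<close> is the hom between their images in
  \<open>A\<^sub>c\<^sub>c\<close>.\<close>

definition sym_hom where
  "sym_hom A Y \<psi> X \<phi> = Join X Y ((\<lambda>y. (\<psi> y)\<^sup>o \<cdot> \<phi> y) ` cobj A)"

definition L_hom where
  "L_hom A Y \<psi> X \<phi> = Join X Y ((\<lambda>b. L_copresheaf A Y \<psi> b \<cdot> L_presheaf A X \<phi> b) ` cobj A)"

context
  fixes A :: "('a, 'o, 'm) qcat"
  assumes A: "qcat Q A"
begin

lemma sym_adjunction_typed:
  assumes "sym_adjunction (symz Q A) X \<phi>"
  shows "X \<in> qobj Q" "\<And>y. y \<in> cobj A \<Longrightarrow> arr (\<phi> y)" "\<And>y. y \<in> cobj A \<Longrightarrow> src (\<phi> y) = X"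
    "\<And>y. y \<in> cobj A \<Longrightarrow> trg (\<phi> y) = ctype A y"
  using presheaf_adjunctionD[OF assms] by auto

lemma sym_adjunction_counit_below:
  assumes "sym_adjunction (symz Q A) X \<phi>" "y \<in> cobj A" "y' \<in> cobj A"
  shows "\<phi> y' \<cdot> (\<phi> y)\<^sup>o \<sqsubseteq> chom A y' y"
  using below_trans[OF presheaf_adjunctionD(11)[OF assms(1)] symz_hom_below(1)[OF qcat_typed[OF A]]] assms
  by simp

context
  fixes X \<phi>
  assumes \<phi>: "sym_adjunction (symz Q A) X \<phi>"
begin

lemma
  assumes b: "b \<in> cobj A"
  shows L_presheaf_eq: "L_presheaf A X \<phi> b = Join X (ctype A b) ((\<lambda>y. chom A b y \<cdot> \<phi> y) ` cobj A)"
    and L_presheaf_typed: "arr (L_presheaf A X \<phi> b)" "src (L_presheaf A X \<phi> b) = X"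
      "trg (L_presheaf A X \<phi> b) = ctype A b"
    and L_copresheaf_typed: "arr (L_copresheaf A X \<phi> b)" "src (L_copresheaf A X \<phi> b) = ctype A b"
      "trg (L_copresheaf A X \<phi> b) = X"
  using sym_adjunction_typed[OF \<phi>] qcat_typed[OF A] b by (auto simp: L_presheaf_def L_copresheaf_def)

lemma below_L_presheaf: "y \<in> cobj A \<Longrightarrow> \<phi> y \<sqsubseteq> L_presheaf A X \<phi> y"
proof -
  assume y: "y \<in> cobj A"
  note F = sym_adjunction_typed[OF \<phi>]
  have "\<phi> y \<sqsubseteq> chom A y y \<cdot> \<phi> y"
    by (rule below_comp_unit_left[OF qcat_id_below[OF A y]]) (use F y in auto)
  also have "\<dots> \<sqsubseteq> L_presheaf A X \<phi> y" unfolding L_presheaf_eq[OF y]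
    by (rule Join_image_upper[of y "cobj A" X "ctype A y" "\<lambda>y'. chom A y y' \<cdot> \<phi> y'", simplified])
      (use F y qcat_typed[OF A] in auto)
  finally show ?thesis .
qed

lemma dual_below_L_copresheaf: "y \<in> cobj A \<Longrightarrow> (\<phi> y)\<^sup>o \<sqsubseteq> L_copresheaf A X \<phi> y"
proof -
  assume y: "y \<in> cobj A"
  note F = sym_adjunction_typed[OF \<phi>]
  have "(\<phi> y)\<^sup>o \<sqsubseteq> (\<phi> y)\<^sup>o \<cdot> chom A y y"
    by (rule below_comp_unit_right[OF qcat_id_below[OF A y]]) (use F y in auto)
  also have "\<dots> \<sqsubseteq> L_copresheaf A X \<phi> y" unfolding L_copresheaf_def
    by (rule Join_image_upper[of y "cobj A" "ctype A y" X "\<lambda>y'. (\<phi> y')\<^sup>o \<cdot> chom A y' y", simplified])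
      (use F y qcat_typed[OF A] in auto)
  finally show ?thesis .
qed

lemma comp_L_copresheaf_below:
  assumes z: "z \<in> cobj A" and b: "b \<in> cobj A"
  shows "\<phi> z \<cdot> L_copresheaf A X \<phi> b \<sqsubseteq> chom A z b"
proof -
  note F = sym_adjunction_typed[OF \<phi>]
  have "\<phi> z \<cdot> L_copresheaf A X \<phi> b = Join (ctype A b) (ctype A z) ((\<lambda>y. \<phi> z \<cdot> ((\<phi> y)\<^sup>o \<cdot> chom A y b)) ` cobj A)"
    unfolding L_copresheaf_def by (rule comp_Join_image_right) (use F qcat_typed[OF A] b z in auto)
  also have "\<dots> \<sqsubseteq> chom A z b"
  proof (rule Join_image_least)
    fix y assume y: "y \<in> cobj A"
    have "\<phi> z \<cdot> ((\<phi> y)\<^sup>o \<cdot> chom A y b) = (\<phi> z \<cdot> (\<phi> y)\<^sup>o) \<cdot> chom A y b"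
      using F qcat_typed[OF A] b z y by (simp add: comp_assoc)
    also have "\<dots> \<sqsubseteq> chom A z y \<cdot> chom A y b"
      by (rule comp_mono_left[OF sym_adjunction_counit_below[OF \<phi> y z]]) (use F qcat_typed[OF A] b z y in auto)
    also have "\<dots> \<sqsubseteq> chom A z b" by (rule qcat_comp_below[OF A b y z])
    finally show "\<phi> z \<cdot> ((\<phi> y)\<^sup>o \<cdot> chom A y b) \<sqsubseteq> chom A z b" .
  qed (use F qcat_typed[OF A] b z in auto)
  finally show ?thesis .
qed

lemma L_presheaf_comp_below:
  assumes y: "y \<in> cobj A" and b: "b \<in> cobj A"
  shows "L_presheaf A X \<phi> b \<cdot> (\<phi> y)\<^sup>o \<sqsubseteq> chom A b y"
proof -
  note F = sym_adjunction_typed[OF \<phi>]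
  have "L_presheaf A X \<phi> b \<cdot> (\<phi> y)\<^sup>o = Join (ctype A y) (ctype A b) ((\<lambda>y'. (chom A b y' \<cdot> \<phi> y') \<cdot> (\<phi> y)\<^sup>o) ` cobj A)"
    unfolding L_presheaf_eq[OF b] by (rule comp_Join_image_left) (use F qcat_typed[OF A] b y in auto)
  also have "\<dots> \<sqsubseteq> chom A b y"
  proof (rule Join_image_least)
    fix y' assume y': "y' \<in> cobj A"
    have "(chom A b y' \<cdot> \<phi> y') \<cdot> (\<phi> y)\<^sup>o = chom A b y' \<cdot> (\<phi> y' \<cdot> (\<phi> y)\<^sup>o)"
      using F qcat_typed[OF A] b y' y by (simp add: comp_assoc)
    also have "\<dots> \<sqsubseteq> chom A b y' \<cdot> chom A y' y"
      by (rule comp_mono_right[OF sym_adjunction_counit_below[OF \<phi> y y']]) (use F qcat_typed[OF A] b y y' in auto)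
    also have "\<dots> \<sqsubseteq> chom A b y" by (rule qcat_comp_below[OF A y y' b])
    finally show "(chom A b y' \<cdot> \<phi> y') \<cdot> (\<phi> y)\<^sup>o \<sqsubseteq> chom A b y" .
  qed (use F qcat_typed[OF A] b y in auto)
  finally show ?thesis .
qed

lemma L_adjunction: "presheaf_adjunction A X (L_presheaf A X \<phi>) (L_copresheaf A X \<phi>)"
proof -
  note F = sym_adjunction_typed[OF \<phi>]
  have presheaf: "presheaf A X (L_presheaf A X \<phi>)"
    by (rule presheaf_Join[OF qcat_typed[OF A] F(1), of "cobj A" "ctype A" "\<lambda>y b. chom A b y" \<phi>])
      (use representable_presheaf[OF A] F L_presheaf_eq in auto)
  have copresheaf: "copresheaf A X (L_copresheaf A X \<phi>)"
    by (rule copresheaf_Join[OF qcat_typed[OF A] F(1), of "cobj A" "ctype A" "\<lambda>y b. chom A y b" "\<lambda>y. (\<phi> y)\<^sup>o"])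
      (use representable_copresheaf[OF A] F in \<open>auto simp: L_copresheaf_def\<close>)
  have "idq X \<sqsubseteq> Join X X ((\<lambda>y. (\<phi> y)\<^sup>o \<cdot> \<phi> y) ` cobj A)"
    using presheaf_adjunctionD(10)[OF \<phi>] by simp
  also have "\<dots> \<sqsubseteq> Join X X ((\<lambda>y. L_copresheaf A X \<phi> y \<cdot> L_presheaf A X \<phi> y) ` cobj A)"
    by (rule Join_image_mono)
      (use F L_presheaf_typed L_copresheaf_typed
        in \<open>auto intro: comp_mono below_L_presheaf dual_below_L_copresheaf\<close>)
  finally have unit: "idq X \<sqsubseteq> Join X X ((\<lambda>y. L_copresheaf A X \<phi> y \<cdot> L_presheaf A X \<phi> y) ` cobj A)" .
  have counit: "L_presheaf A X \<phi> b' \<cdot> L_copresheaf A X \<phi> b \<sqsubseteq> chom A b' b"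
    if b: "b \<in> cobj A" and b': "b' \<in> cobj A" for b b'
  proof -
    have "L_presheaf A X \<phi> b' \<cdot> L_copresheaf A X \<phi> b
        = Join (ctype A b) (ctype A b') ((\<lambda>y. L_presheaf A X \<phi> b' \<cdot> ((\<phi> y)\<^sup>o \<cdot> chom A y b)) ` cobj A)"
      unfolding L_copresheaf_def
      by (rule comp_Join_image_right) (use F qcat_typed[OF A] b b' L_presheaf_typed in auto)
    also have "\<dots> \<sqsubseteq> chom A b' b"
    proof (rule Join_image_least)
      fix y assume y: "y \<in> cobj A"
      have "L_presheaf A X \<phi> b' \<cdot> ((\<phi> y)\<^sup>o \<cdot> chom A y b) = (L_presheaf A X \<phi> b' \<cdot> (\<phi> y)\<^sup>o) \<cdot> chom A y b"
        using F qcat_typed[OF A] b b' y L_presheaf_typed[OF b'] by (simp add: comp_assoc)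
      also have "\<dots> \<sqsubseteq> chom A b' y \<cdot> chom A y b"
        by (rule comp_mono_left[OF L_presheaf_comp_below[OF y b']]) (use F qcat_typed[OF A] b b' y L_presheaf_typed[OF b'] in auto)
      also have "\<dots> \<sqsubseteq> chom A b' b" by (rule qcat_comp_below[OF A b y b'])
      finally show "L_presheaf A X \<phi> b' \<cdot> ((\<phi> y)\<^sup>o \<cdot> chom A y b) \<sqsubseteq> chom A b' b" .
    qed (use F qcat_typed[OF A] b b' L_presheaf_typed[OF b'] in auto)
    finally show ?thesis .
  qed
  show ?thesis
    unfolding presheaf_adjunction_def using presheaf copresheaf unit counit by blast
qed

end

end

context
  fixes A :: "('a, 'o, 'm) qcat" and X \<phi> Y \<psi>
  assumes A: "qcat Q A"
    and \<phi>: "sym_adjunction (symz Q A) X \<phi>" and \<psi>: "sym_adjunction (symz Q A) Y \<psi>"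
begin

lemma
  shows sym_hom_typed: "arr (sym_hom A Y \<psi> X \<phi>)" "src (sym_hom A Y \<psi> X \<phi>) = X"
      "trg (sym_hom A Y \<psi> X \<phi>) = Y"
    and L_hom_typed: "arr (L_hom A Y \<psi> X \<phi>)" "src (L_hom A Y \<psi> X \<phi>) = X" "trg (L_hom A Y \<psi> X \<phi>) = Y"
  using sym_adjunction_typed[OF A \<phi>] sym_adjunction_typed[OF A \<psi>] L_presheaf_typed[OF A \<phi>]
    L_copresheaf_typed[OF A \<psi>] qcat_typed[OF A]
  by (auto simp: L_hom_def sym_hom_def)

lemma comp_L_hom_comp_below:
  assumes z: "z \<in> cobj A" and y: "y \<in> cobj A"
  shows "(\<psi> z \<cdot> L_hom A Y \<psi> X \<phi>) \<cdot> (\<phi> y)\<^sup>o \<sqsubseteq> chom A z y"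
proof -
  note F = sym_adjunction_typed[OF A \<phi>] sym_adjunction_typed[OF A \<psi>] qcat_typed[OF A]
    L_presheaf_typed[OF A \<phi>] L_copresheaf_typed[OF A \<psi>]
  have "\<psi> z \<cdot> L_hom A Y \<psi> X \<phi>
      = Join X (ctype A z) ((\<lambda>b. \<psi> z \<cdot> L_copresheaf A Y \<psi> b \<cdot> L_presheaf A X \<phi> b) ` cobj A)"
    unfolding L_hom_def by (rule comp_Join_image_right) (use F z in auto)
  then have "(\<psi> z \<cdot> L_hom A Y \<psi> X \<phi>) \<cdot> (\<phi> y)\<^sup>o
      = Join (ctype A y) (ctype A z)
          ((\<lambda>b. (\<psi> z \<cdot> L_copresheaf A Y \<psi> b \<cdot> L_presheaf A X \<phi> b) \<cdot> (\<phi> y)\<^sup>o) ` cobj A)"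
    by (simp, intro comp_Join_image_left) (use F z y in auto)
  also have "\<dots> \<sqsubseteq> chom A z y"
  proof (rule Join_image_least)
    fix b assume b: "b \<in> cobj A"
    have "(\<psi> z \<cdot> L_copresheaf A Y \<psi> b \<cdot> L_presheaf A X \<phi> b) \<cdot> (\<phi> y)\<^sup>o
        = (\<psi> z \<cdot> L_copresheaf A Y \<psi> b) \<cdot> (L_presheaf A X \<phi> b \<cdot> (\<phi> y)\<^sup>o)"
      using F z y b by (simp add: comp_assoc)
    also have "\<dots> \<sqsubseteq> chom A z b \<cdot> chom A b y"
      by (rule comp_mono[OF L_presheaf_comp_below[OF A \<phi> y b] comp_L_copresheaf_below[OF A \<psi> z b]])
        (use F z y b in auto)
    also have "\<dots> \<sqsubseteq> chom A z y" by (rule qcat_comp_below[OF A y b z])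
    finally show "(\<psi> z \<cdot> L_copresheaf A Y \<psi> b \<cdot> L_presheaf A X \<phi> b) \<cdot> (\<phi> y)\<^sup>o \<sqsubseteq> chom A z y" .
  qed (use F z y in auto)
  finally show ?thesis .
qed

lemma sym_hom_below_L_hom: "sym_hom A Y \<psi> X \<phi> \<sqsubseteq> L_hom A Y \<psi> X \<phi>"
  unfolding sym_hom_def L_hom_def
proof (rule Join_image_mono)
  fix y assume y: "y \<in> cobj A"
  show "(\<psi> y)\<^sup>o \<cdot> \<phi> y \<sqsubseteq> L_copresheaf A Y \<psi> y \<cdot> L_presheaf A X \<phi> y"
    by (rule comp_mono[OF below_L_presheaf[OF A \<phi> y] dual_below_L_copresheaf[OF A \<psi> y]])
      (use sym_adjunction_typed[OF A \<phi>] sym_adjunction_typed[OF A \<psi>] y in auto)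
qed (use sym_adjunction_typed[OF A \<phi>] sym_adjunction_typed[OF A \<psi>] L_presheaf_typed[OF A \<phi>]
    L_copresheaf_typed[OF A \<psi>] qcat_typed[OF A] in auto)

lemma dual_sym_hom: "(sym_hom A X \<phi> Y \<psi>)\<^sup>o = sym_hom A Y \<psi> X \<phi>"
proof -
  note F = sym_adjunction_typed[OF A \<phi>] sym_adjunction_typed[OF A \<psi>]
  have "(sym_hom A X \<phi> Y \<psi>)\<^sup>o = Join X Y (qinv Q ` (\<lambda>y. (\<phi> y)\<^sup>o \<cdot> \<psi> y) ` cobj A)"
    unfolding sym_hom_def by (rule dual_Join) (use F in auto)
  also have "\<dots> = sym_hom A Y \<psi> X \<phi>"
    unfolding sym_hom_def image_image using F by (simp add: dual_comp cong: image_cong)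
  finally show ?thesis .
qed

text \<open>The hom of \<open>(A\<^sub>s)\<^sub>s\<^sub>c\<close> is the largest \<open>u\<close> with \<open>\<psi> \<circ> u \<circ> \<phi>\<^sup>o \<le> A\<^sub>s\<close>, because
  \<open>u \<le> (\<psi>\<^sup>o \<otimes> \<psi>) \<circ> u \<circ> (\<phi>\<^sup>o \<otimes> \<phi>) \<le> \<psi>\<^sup>o \<otimes> A\<^sub>s \<otimes> \<phi> \<le> \<psi>\<^sup>o \<otimes> \<phi>\<close>.\<close>

lemma below_sym_hom:
  assumes u: "arr u" "src u = X" "trg u = Y"
    and bound: "\<And>z y. z \<in> cobj A \<Longrightarrow> y \<in> cobj A \<Longrightarrow> (\<psi> z \<cdot> u) \<cdot> (\<phi> y)\<^sup>o \<sqsubseteq> chom (symz Q A) z y"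
  shows "u \<sqsubseteq> sym_hom A Y \<psi> X \<phi>"
proof -
  note Fp = sym_adjunction_typed[OF A \<phi>] and Fq = sym_adjunction_typed[OF A \<psi>]
  note Tp = presheaf_adjunctionD[OF \<phi>] and Tq = presheaf_adjunctionD[OF \<psi>]
  note symz_typed = symz_hom_typed[OF qcat_typed[OF A]]
  have "u = idq Y \<cdot> u \<cdot> idq X" using u by simp
  also have "\<dots> \<sqsubseteq> Join Y Y ((\<lambda>z. (\<psi> z)\<^sup>o \<cdot> \<psi> z) ` cobj A) \<cdot> u \<cdot> Join X X ((\<lambda>y. (\<phi> y)\<^sup>o \<cdot> \<phi> y) ` cobj A)"
    by (rule comp_mono[OF comp_mono_right[OF Tp(10)[simplified]] Tq(10)[simplified]])
      (use u Fp Fq in auto)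
  also have "u \<cdot> Join X X ((\<lambda>y. (\<phi> y)\<^sup>o \<cdot> \<phi> y) ` cobj A)
      = Join X Y ((\<lambda>y. u \<cdot> ((\<phi> y)\<^sup>o \<cdot> \<phi> y)) ` cobj A)"
    by (rule comp_Join_image_right) (use u Fp in auto)
  also have "Join Y Y ((\<lambda>z. (\<psi> z)\<^sup>o \<cdot> \<psi> z) ` cobj A) \<cdot> Join X Y ((\<lambda>y. u \<cdot> ((\<phi> y)\<^sup>o \<cdot> \<phi> y)) ` cobj A)
      \<sqsubseteq> sym_hom A Y \<psi> X \<phi>"
  proof (rule comp_Join_Join_below)
    fix z y assume z: "z \<in> cobj A" and y: "y \<in> cobj A"
    have "((\<psi> z)\<^sup>o \<cdot> \<psi> z) \<cdot> u \<cdot> ((\<phi> y)\<^sup>o \<cdot> \<phi> y) = (\<psi> z)\<^sup>o \<cdot> ((\<psi> z \<cdot> u) \<cdot> (\<phi> y)\<^sup>o) \<cdot> \<phi> y"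
      using u Fp Fq z y by (simp add: comp_assoc)
    also have "\<dots> \<sqsubseteq> (\<psi> z)\<^sup>o \<cdot> chom (symz Q A) z y \<cdot> \<phi> y"
      by (rule comp_mono_right[OF comp_mono_left[OF bound[OF z y]]]) (use u Fp Fq z y in auto)
    also have "\<dots> = ((\<psi> z)\<^sup>o \<cdot> chom (symz Q A) z y) \<cdot> \<phi> y"
      using u Fp Fq z y symz_typed[OF y z] by (simp add: comp_assoc)
    also have "\<dots> \<sqsubseteq> (\<psi> y)\<^sup>o \<cdot> \<phi> y"
      by (rule comp_mono_left[OF Tq(9)]) (use u Fp Fq z y symz_typed[OF y z] in auto)
    also have "\<dots> \<sqsubseteq> sym_hom A Y \<psi> X \<phi>" unfolding sym_hom_def
      by (rule Join_image_upper[of y "cobj A" X Y "\<lambda>y. (\<psi> y)\<^sup>o \<cdot> \<phi> y", simplified])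
        (use Fp Fq y in auto)
    finally show "((\<psi> z)\<^sup>o \<cdot> \<psi> z) \<cdot> u \<cdot> ((\<phi> y)\<^sup>o \<cdot> \<phi> y) \<sqsubseteq> sym_hom A Y \<psi> X \<phi>" .
  qed (use u Fp Fq sym_hom_typed in auto)
  finally show ?thesis .
qed

end

lemma qmeet_L_hom:
  assumes A: "qcat Q A"
    and \<phi>: "sym_adjunction (symz Q A) X \<phi>" and \<psi>: "sym_adjunction (symz Q A) Y \<psi>"
  shows "qmeet Q X Y (L_hom A Y \<psi> X \<phi>) ((L_hom A X \<phi> Y \<psi>)\<^sup>o) = sym_hom A Y \<psi> X \<phi>"
proof -
  note Fp = sym_adjunction_typed[OF A \<phi>] and Fq = sym_adjunction_typed[OF A \<psi>]
  note ty = L_hom_typed[OF A \<phi> \<psi>] L_hom_typed[OF A \<psi> \<phi>] sym_hom_typed[OF A \<phi> \<psi>]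
  let ?u = "qmeet Q X Y (L_hom A Y \<psi> X \<phi>) ((L_hom A X \<phi> Y \<psi>)\<^sup>o)"
  have u: "arr ?u" "src ?u = X" "trg ?u = Y" "?u \<sqsubseteq> L_hom A Y \<psi> X \<phi>" "?u \<sqsubseteq> (L_hom A X \<phi> Y \<psi>)\<^sup>o"
    using qmeet_typed qmeet_lower ty by auto
  have "sym_hom A Y \<psi> X \<phi> \<sqsubseteq> ?u"
  proof (rule qmeet_greatest)
    show "sym_hom A Y \<psi> X \<phi> \<sqsubseteq> L_hom A Y \<psi> X \<phi>" by (rule sym_hom_below_L_hom[OF A \<phi> \<psi>])
    have "(sym_hom A X \<phi> Y \<psi>)\<^sup>o \<sqsubseteq> (L_hom A X \<phi> Y \<psi>)\<^sup>o"
      by (rule dual_mono[OF sym_hom_below_L_hom[OF A \<psi> \<phi>]])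
    then show "sym_hom A Y \<psi> X \<phi> \<sqsubseteq> (L_hom A X \<phi> Y \<psi>)\<^sup>o" using dual_sym_hom[OF A \<phi> \<psi>] by simp
  qed (use ty in auto)
  moreover have "?u \<sqsubseteq> sym_hom A Y \<psi> X \<phi>"
  proof (rule below_sym_hom[OF A \<phi> \<psi> u(1-3)])
    fix z y assume z: "z \<in> cobj A" and y: "y \<in> cobj A"
    show "(\<psi> z \<cdot> ?u) \<cdot> (\<phi> y)\<^sup>o \<sqsubseteq> chom (symz Q A) z y"
    proof (rule symz_hom_greatest[OF qcat_typed[OF A] y z])
      have "(\<psi> z \<cdot> ?u) \<cdot> (\<phi> y)\<^sup>o \<sqsubseteq> (\<psi> z \<cdot> L_hom A Y \<psi> X \<phi>) \<cdot> (\<phi> y)\<^sup>o"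
        by (rule comp_mono_left[OF comp_mono_right[OF u(4)]]) (use u Fp Fq z y in auto)
      also have "\<dots> \<sqsubseteq> chom A z y" by (rule comp_L_hom_comp_below[OF A \<phi> \<psi> z y])
      finally show "(\<psi> z \<cdot> ?u) \<cdot> (\<phi> y)\<^sup>o \<sqsubseteq> chom A z y" .
      have dual_u: "?u\<^sup>o \<sqsubseteq> L_hom A X \<phi> Y \<psi>" using dual_mono[OF u(5)] ty by simp
      have "((\<psi> z \<cdot> ?u) \<cdot> (\<phi> y)\<^sup>o)\<^sup>o = (\<phi> y \<cdot> ?u\<^sup>o) \<cdot> (\<psi> z)\<^sup>o"
        using u Fp Fq z y by (simp add: dual_comp comp_assoc)
      also have "\<dots> \<sqsubseteq> (\<phi> y \<cdot> L_hom A X \<phi> Y \<psi>) \<cdot> (\<psi> z)\<^sup>o"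
        by (rule comp_mono_left[OF comp_mono_right[OF dual_u]]) (use u Fp Fq z y in auto)
      also have "\<dots> \<sqsubseteq> chom A y z" by (rule comp_L_hom_comp_below[OF A \<psi> \<phi> y z])
      finally have "((\<psi> z \<cdot> ?u) \<cdot> (\<phi> y)\<^sup>o)\<^sup>o \<sqsubseteq> chom A y z" .
      from dual_mono[OF this] show "(\<psi> z \<cdot> ?u) \<cdot> (\<phi> y)\<^sup>o \<sqsubseteq> (chom A y z)\<^sup>o"
        using u Fp Fq z y by simp
    qed
  qed
  ultimately show ?thesis by (rule below_antisym[rotated])
qed

lemma sym_adjunction_below_of_unit:
  assumes A: "qcat Q A"
    and \<phi>: "sym_adjunction (symz Q A) X \<phi>" and \<psi>: "sym_adjunction (symz Q A) X \<psi>"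
    and unit: "idq X \<sqsubseteq> sym_hom A X \<psi> X \<phi>" and y: "y \<in> cobj A"
  shows "\<psi> y \<sqsubseteq> \<phi> y"
proof -
  note Fp = sym_adjunction_typed[OF A \<phi>] and Fq = sym_adjunction_typed[OF A \<psi>]
  have "\<psi> y = \<psi> y \<cdot> idq X" using Fq y by simp
  also have "\<dots> \<sqsubseteq> \<psi> y \<cdot> sym_hom A X \<psi> X \<phi>"
    by (rule comp_mono_right[OF unit]) (use Fq y in auto)
  also have "\<dots> = Join X (ctype A y) ((\<lambda>y'. \<psi> y \<cdot> ((\<psi> y')\<^sup>o \<cdot> \<phi> y')) ` cobj A)"
    unfolding sym_hom_def by (rule comp_Join_image_right) (use Fp Fq y in auto)
  also have "\<dots> \<sqsubseteq> \<phi> y"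
  proof (rule Join_image_least)
    fix y' assume y': "y' \<in> cobj A"
    have "\<psi> y \<cdot> ((\<psi> y')\<^sup>o \<cdot> \<phi> y') = (\<psi> y \<cdot> (\<psi> y')\<^sup>o) \<cdot> \<phi> y'"
      using Fp Fq y y' by (simp add: comp_assoc)
    also have "\<dots> \<sqsubseteq> chom (symz Q A) y y' \<cdot> \<phi> y'"
      by (rule comp_mono_left[OF presheaf_adjunctionD(11)[OF \<psi>]]) (use Fp Fq y y' in auto)
    also have "\<dots> \<sqsubseteq> \<phi> y" using presheaf_adjunctionD(5)[OF \<phi>, of y' y] y y' by simp
    finally show "\<psi> y \<cdot> ((\<psi> y')\<^sup>o \<cdot> \<phi> y') \<sqsubseteq> \<phi> y" .
  qed (use Fp Fq y qcat_typed[OF A] in auto)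
  finally show ?thesis .
qed

lemma cauchy_simps [simp]: "ctype (cauchy Q A) = fst" "chom (cauchy Q A) = cc_hom Q A"
  by (auto simp: cauchy_def)

lemma in_cauchy_iff:
  "p \<in> cobj (cauchy Q A) \<longleftrightarrow>
     fst p \<in> qobj Q \<and> extensional_on (cobj A) (snd p) \<and> left_adj_presheaf Q A (fst p) (snd p)"
  by (auto simp: cauchy_def)

lemma symcomp_simps [simp]: "ctype (symcomp Q A) = fst" "chom (symcomp Q A) = cc_hom Q A"
  by (auto simp: symcomp_def)

lemma in_symcomp_iff:
  "p \<in> cobj (symcomp Q A) \<longleftrightarrow> p \<in> cobj (cauchy Q A) \<and> sym_left_adj_presheaf Q A (fst p) (snd p)"
  by (auto simp: symcomp_def)

context
  fixes A :: "('a, 'o, 'm) qcat"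
  assumes A: "qcat Q A"
begin

lemma symcomp_symz_objD:
  assumes p: "p \<in> cobj (symcomp Q (symz Q A))"
  shows "sym_adjunction (symz Q A) (fst p) (snd p)" "extensional_on (cobj A) (snd p)"
  using p sym_left_adj_presheaf_adjunction[OF typed_symz[OF qcat_typed[OF A]]]
  by (auto simp: in_symcomp_iff in_cauchy_iff)

lemma Lmap_in_cauchy:
  assumes p: "p \<in> cobj (symcomp Q (symz Q A))"
  shows "Lmap Q A p \<in> cobj (cauchy Q A)"
proof -
  note adj = symcomp_symz_objD(1)[OF p]
  have X: "fst p \<in> qobj Q" using sym_adjunction_typed(1)[OF A adj] .
  have "left_adj_presheaf Q A (fst p) (L_presheaf A (fst p) (snd p))"
    using L_adjunction[OF A adj] left_adj_presheaf_iff[OF qcat_typed[OF A] X] by blast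
  moreover have "extensional_on (cobj A) (L_presheaf A (fst p) (snd p))"
    by (simp add: L_presheaf_def extensional_on_def)
  ultimately show ?thesis using X by (simp add: Lmap_eq in_cauchy_iff)
qed

lemma symcomp_symz_hom:
  "p \<in> cobj (symcomp Q (symz Q A)) \<Longrightarrow> q \<in> cobj (symcomp Q (symz Q A)) \<Longrightarrow>
   chom (symcomp Q (symz Q A)) q p = sym_hom A (fst q) (snd q) (fst p) (snd p)"
  using cc_hom_eq[OF typed_symz[OF qcat_typed[OF A]] symcomp_symz_objD(1), of q p]
  by (simp add: sym_hom_def)

lemma symz_cauchy_hom_Lmap:
  assumes p: "p \<in> cobj (symcomp Q (symz Q A))" and q: "q \<in> cobj (symcomp Q (symz Q A))"
  shows "chom (symz Q (cauchy Q A)) (Lmap Q A q) (Lmap Q A p) = sym_hom A (fst q) (snd q) (fst p) (snd p)"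
proof -
  note adj = symcomp_symz_objD(1)
  have "cc_hom Q A (Lmap Q A q) (Lmap Q A p) = L_hom A (fst q) (snd q) (fst p) (snd p)"
    and "cc_hom Q A (Lmap Q A p) (Lmap Q A q) = L_hom A (fst p) (snd p) (fst q) (snd q)"
    using cc_hom_eq[OF qcat_typed[OF A]] L_adjunction[OF A adj[OF q]] L_adjunction[OF A adj[OF p]]
    by (simp_all add: Lmap_eq L_hom_def)
  then show ?thesis using qmeet_L_hom[OF A adj[OF p] adj[OF q]] by (simp add: Lmap_eq)
qed

lemma Lmap_inj: "inj_on (Lmap Q A) (cobj (symcomp Q (symz Q A)))"
proof (rule inj_onI)
  fix p q assume p: "p \<in> cobj (symcomp Q (symz Q A))" and q: "q \<in> cobj (symcomp Q (symz Q A))"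
    and eq: "Lmap Q A p = Lmap Q A q"
  note adj = symcomp_symz_objD[OF p] symcomp_symz_objD[OF q]
  have X: "fst q = fst p" using eq by (simp add: Lmap_eq)
  have pp: "sym_hom A (fst p) (snd p) (fst p) (snd p) = sym_hom A (fst q) (snd q) (fst p) (snd p)"
    and qq: "sym_hom A (fst p) (snd p) (fst p) (snd p) = sym_hom A (fst p) (snd p) (fst q) (snd q)"
    using symz_cauchy_hom_Lmap[OF p p] symz_cauchy_hom_Lmap[OF p q] symz_cauchy_hom_Lmap[OF q p] eq
    by simp_all
  have unit: "idq (fst p) \<sqsubseteq> sym_hom A (fst p) (snd p) (fst p) (snd p)"
    using presheaf_adjunctionD(10)[OF adj(1)] by (simp add: sym_hom_def)
  have "snd p y = snd q y" if y: "y \<in> cobj A" for y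
  proof (rule below_antisym)
    show "snd q y \<sqsubseteq> snd p y"
      by (rule sym_adjunction_below_of_unit[OF A adj(1) adj(3)[unfolded X] _ y]) (use unit pp X in simp)
    show "snd p y \<sqsubseteq> snd q y"
      by (rule sym_adjunction_below_of_unit[OF A adj(3)[unfolded X] adj(1) _ y]) (use unit qq X in simp)
  qed
  then have "snd p = snd q" using adj(2,4) unfolding extensional_on_def by (metis ext)
  then show "p = q" using X by (simp add: prod_eq_iff)
qed

lemma L_full_embedding:
  "full_embedding Q (symcomp Q (symz Q A)) (symz Q (cauchy Q A)) (Lmap Q A)"
proof -
  let ?S = "symcomp Q (symz Q A)" and ?C = "symz Q (cauchy Q A)"
  have objs: "Lmap Q A p \<in> cobj ?C \<and> ctype ?C (Lmap Q A p) = ctype ?S p" if "p \<in> cobj ?S" for p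
    using Lmap_in_cauchy[OF that] by (simp add: Lmap_eq)
  have homs: "chom ?C (Lmap Q A q) (Lmap Q A p) = chom ?S q p"
    if "p \<in> cobj ?S" "q \<in> cobj ?S" for p q
    using symz_cauchy_hom_Lmap[OF that] symcomp_symz_hom[OF that] by (simp only:)
  have le: "qle Q (chom ?S q p) (chom ?C (Lmap Q A q) (Lmap Q A p))"
    if "p \<in> cobj ?S" "q \<in> cobj ?S" for p q
    unfolding homs[OF that] symcomp_symz_hom[OF that]
    by (rule qle_refl[OF sym_hom_typed(1)[OF A symcomp_symz_objD(1)[OF that(1)]
          symcomp_symz_objD(1)[OF that(2)]]])
  show ?thesis
    unfolding full_embedding_def qfunctor_def using objs homs le Lmap_inj by blast
qed

end

section \<open>Naturality of \<open>L\<close>\<close>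

lemma qfunctorD:
  assumes "qcat Q A" "qcat Q B" "qfunctor Q A B F"
  shows "\<And>x. x \<in> cobj A \<Longrightarrow> F x \<in> cobj B" "\<And>x. x \<in> cobj A \<Longrightarrow> ctype B (F x) = ctype A x"
    "\<And>x y. x \<in> cobj A \<Longrightarrow> y \<in> cobj A \<Longrightarrow> chom A y x \<sqsubseteq> chom B (F y) (F x)"
  using assms qcat_typed[OF assms(1)] qcat_typed[OF assms(2)]
  by (auto simp: qfunctor_def below_def)

text \<open>Both sides of the naturality square send \<open>\<phi>\<close> to \<open>B(-, F-) \<otimes> \<phi>\<close>: on the left
  \<open>B(-, F-) \<otimes> A \<otimes> \<phi>\<close>, on the right \<open>B \<otimes> B\<^sub>s(-, F-) \<otimes> \<phi>\<close>, and the identities of \<open>A\<close> and \<open>B\<^sub>s\<close>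
  are absorbed.\<close>

lemma Lmap_natural:
  assumes A: "qcat Q A" and B: "qcat Q B" and F: "qfunctor Q A B F"
    and p: "p \<in> cobj (symcomp Q (symz Q A))"
  shows "cc_map Q A B F (Lmap Q A p) = Lmap Q B (cc_map Q (symz Q A) (symz Q B) F p)"
proof -
  define X \<phi> where "X = fst p" and "\<phi> = snd p"
  have adj: "sym_adjunction (symz Q A) X \<phi>" using symcomp_symz_objD(1)[OF A p] by (simp add: X_def \<phi>_def)
  note Fp = sym_adjunction_typed[OF A adj] and FD = qfunctorD[OF A B F]
  note TA = qcat_typed[OF A] and TB = qcat_typed[OF B]
  define G where "G b' = Join X (ctype B b') ((\<lambda>y. chom (symz Q B) b' (F y) \<cdot> \<phi> y) ` cobj A)" for b'
  have symz_typed: "arr (chom (symz Q B) b' (F y)) \<and> src (chom (symz Q B) b' (F y)) = ctype A y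
      \<and> trg (chom (symz Q B) b' (F y)) = ctype B b'" if "b' \<in> cobj B" "y \<in> cobj A" for b' y
    using symz_hom_typed[OF TB FD(1)[OF that(2)] that(1)] FD(2)[OF that(2)] by simp
  have left: "Join X (ctype B b) ((\<lambda>a. chom B b (F a) \<cdot> L_presheaf A X \<phi> a) ` cobj A)
      = Join X (ctype B b) ((\<lambda>y. chom B b (F y) \<cdot> \<phi> y) ` cobj A)" if b: "b \<in> cobj B" for b
  proof -
    have "Join X (ctype B b) ((\<lambda>a. chom B b (F a) \<cdot> L_presheaf A X \<phi> a) ` cobj A)
        = Join X (ctype B b) ((\<lambda>a. chom B b (F a) \<cdot> Join X (ctype A a) ((\<lambda>y. chom A a y \<cdot> \<phi> y) ` cobj A)) ` cobj A)"
      using L_presheaf_eq[OF A adj] by (simp cong: image_cong)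
    also have "\<dots> = Join X (ctype B b) ((\<lambda>y. chom B b (F y) \<cdot> \<phi> y) ` cobj A)"
    proof (rule Join_comp_Join_absorb[where k = "\<lambda>a. chom B b (F a)" and S = "ctype A"
          and m = "\<lambda>a y. chom A a y" and T = "ctype A" and n = "\<lambda>y. chom B b (F y)"])
      fix a y assume a: "a \<in> cobj A" and y: "y \<in> cobj A"
      have "chom B b (F a) \<cdot> chom A a y \<sqsubseteq> chom B b (F a) \<cdot> chom B (F a) (F y)"
        by (rule comp_mono_right[OF FD(3)[OF y a]]) (use TA TB FD a y b in auto)
      also have "\<dots> \<sqsubseteq> chom B b (F y)" by (rule qcat_comp_below[OF B]) (use FD a y b in auto)
      finally show "chom B b (F a) \<cdot> chom A a y \<sqsubseteq> chom B b (F y)" .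
    next
      fix y assume y: "y \<in> cobj A"
      have "chom B b (F y) \<sqsubseteq> chom B b (F y) \<cdot> chom A y y"
        by (rule below_comp_unit_right[OF qcat_id_below[OF A y]]) (use TB FD y b in auto)
      with y show "\<exists>a\<in>cobj A. chom B b (F y) \<sqsubseteq> chom B b (F a) \<cdot> chom A a y" by blast
    qed (use Fp TA TB FD b in auto)
    finally show ?thesis .
  qed
  have right: "Join X (ctype B b) ((\<lambda>b'. chom B b b' \<cdot> G b') ` cobj B)
      = Join X (ctype B b) ((\<lambda>y. chom B b (F y) \<cdot> \<phi> y) ` cobj A)" if b: "b \<in> cobj B" for b
    unfolding G_def
  proof (rule Join_comp_Join_absorb[where k = "\<lambda>b'. chom B b b'" and S = "ctype B"
        and m = "\<lambda>b' y. chom (symz Q B) b' (F y)" and T = "ctype A" and n = "\<lambda>y. chom B b (F y)"])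
    fix b' y assume b': "b' \<in> cobj B" and y: "y \<in> cobj A"
    have "chom B b b' \<cdot> chom (symz Q B) b' (F y) \<sqsubseteq> chom B b b' \<cdot> chom B b' (F y)"
      by (rule comp_mono_right[OF symz_hom_below(1)[OF TB FD(1)[OF y] b']])
        (use TB FD b b' y symz_hom_typed[OF TB FD(1)[OF y] b'] in auto)
    also have "\<dots> \<sqsubseteq> chom B b (F y)" by (rule qcat_comp_below[OF B]) (use FD y b b' in auto)
    finally show "chom B b b' \<cdot> chom (symz Q B) b' (F y) \<sqsubseteq> chom B b (F y)" .
  next
    fix y assume y: "y \<in> cobj A"
    have "chom B b (F y) \<sqsubseteq> chom B b (F y) \<cdot> chom (symz Q B) (F y) (F y)"
      by (rule below_comp_unit_right[OF symz_id_below[OF B FD(1)[OF y]]]) (use TB FD y b in auto)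
    with FD(1)[OF y] show "\<exists>b'\<in>cobj B. chom B b (F y) \<sqsubseteq> chom B b b' \<cdot> chom (symz Q B) b' (F y)"
      by blast
  qed (use Fp TA TB FD b symz_typed in auto)
  have "cc_map Q (symz Q A) (symz Q B) F p = (X, (\<lambda>b'. if b' \<in> cobj B then G b' else undefined))"
    unfolding cc_map_def pres_comp_eq G_def X_def \<phi>_def by (simp cong: if_cong)
  then show ?thesis
    using left right
    by (auto simp: cc_map_def pres_comp_eq Lmap_eq L_presheaf_def X_def \<phi>_def cong: image_cong)
qed

section \<open>The Cauchy completion\<close>

context
  fixes A :: "('a, 'o, 'm) qcat"
  assumes A: "typed_qcat A"
begin

lemma cauchy_objD:
  assumes p: "p \<in> cobj (cauchy Q A)"
  shows "presheaf_adjunction A (fst p) (snd p) (right_adjoint A p)" "fst p \<in> qobj Q"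
    "extensional_on (cobj A) (snd p)"
  using p right_adjoint_adjunction[OF A] by (auto simp: in_cauchy_iff)

lemma cauchy_obj_typed:
  assumes p: "p \<in> cobj (cauchy Q A)"
  shows "fst p \<in> qobj Q" "\<And>a. a \<in> cobj A \<Longrightarrow> arr (snd p a)"
    "\<And>a. a \<in> cobj A \<Longrightarrow> src (snd p a) = fst p" "\<And>a. a \<in> cobj A \<Longrightarrow> trg (snd p a) = ctype A a"
    "\<And>a. a \<in> cobj A \<Longrightarrow> arr (right_adjoint A p a)"
    "\<And>a. a \<in> cobj A \<Longrightarrow> src (right_adjoint A p a) = ctype A a"
    "\<And>a. a \<in> cobj A \<Longrightarrow> trg (right_adjoint A p a) = fst p"
  using presheaf_adjunctionD[OF cauchy_objD(1)[OF p]] by auto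

lemma cc_hom_typed:
  assumes p: "p \<in> cobj (cauchy Q A)" and q: "q \<in> cobj (cauchy Q A)"
  shows "arr (cc_hom Q A p q)" "src (cc_hom Q A p q) = fst q" "trg (cc_hom Q A p q) = fst p"
  unfolding cc_hom_right_adjoint using cauchy_obj_typed[OF p] cauchy_obj_typed[OF q] A by auto

lemma typed_cauchy: "typed_qcat (cauchy Q A)"
  unfolding typed_qcat_def[of "cauchy Q A"] using cc_hom_typed cauchy_objD(2) by simp

lemma cc_hom_comp_right_adjoint_below:
  assumes p: "p \<in> cobj (cauchy Q A)" and p': "p' \<in> cobj (cauchy Q A)" and a: "a \<in> cobj A"
  shows "cc_hom Q A p p' \<cdot> right_adjoint A p' a \<sqsubseteq> right_adjoint A p a"
proof -
  note Lp = presheaf_adjunctionD[OF cauchy_objD(1)[OF p]]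
    and Lp' = presheaf_adjunctionD[OF cauchy_objD(1)[OF p']]
  note F = cauchy_obj_typed[OF p] cauchy_obj_typed[OF p'] A a
  have "cc_hom Q A p p' \<cdot> right_adjoint A p' a
      = Join (ctype A a) (fst p) ((\<lambda>b. (right_adjoint A p b \<cdot> snd p' b) \<cdot> right_adjoint A p' a) ` cobj A)"
    unfolding cc_hom_right_adjoint by (rule comp_Join_image_left) (use F in auto)
  also have "\<dots> \<sqsubseteq> right_adjoint A p a"
  proof (rule Join_image_least)
    fix b assume b: "b \<in> cobj A"
    have "(right_adjoint A p b \<cdot> snd p' b) \<cdot> right_adjoint A p' a
        = right_adjoint A p b \<cdot> snd p' b \<cdot> right_adjoint A p' a"
      using F b by (simp add: comp_assoc)
    also have "\<dots> \<sqsubseteq> right_adjoint A p b \<cdot> chom A b a"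
      by (rule comp_mono_right[OF Lp'(11)]) (use F b in auto)
    also have "\<dots> \<sqsubseteq> right_adjoint A p a" by (rule Lp(9)[OF b a])
    finally show "(right_adjoint A p b \<cdot> snd p' b) \<cdot> right_adjoint A p' a \<sqsubseteq> right_adjoint A p a" .
  qed (use F in auto)
  finally show ?thesis .
qed

lemma cc_hom_comp_below:
  assumes p: "p \<in> cobj (cauchy Q A)" and q: "q \<in> cobj (cauchy Q A)" and r: "r \<in> cobj (cauchy Q A)"
  shows "cc_hom Q A r q \<cdot> cc_hom Q A q p \<sqsubseteq> cc_hom Q A r p"
  unfolding cc_hom_right_adjoint[of A r q] cc_hom_right_adjoint[of A q p]
proof (rule comp_Join_Join_below)
  note Lq = presheaf_adjunctionD[OF cauchy_objD(1)[OF q]]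
    and Lr = presheaf_adjunctionD[OF cauchy_objD(1)[OF r]]
  note F = cauchy_obj_typed[OF p] cauchy_obj_typed[OF q] cauchy_obj_typed[OF r] A
  fix y z assume y: "y \<in> cobj A" and z: "z \<in> cobj A"
  have "(right_adjoint A r y \<cdot> snd q y) \<cdot> right_adjoint A q z \<cdot> snd p z
      = right_adjoint A r y \<cdot> (snd q y \<cdot> right_adjoint A q z) \<cdot> snd p z"
    using F y z by (simp add: comp_assoc)
  also have "\<dots> \<sqsubseteq> right_adjoint A r y \<cdot> chom A y z \<cdot> snd p z"
    by (rule comp_mono_right[OF comp_mono_left[OF Lq(11)]]) (use F y z in auto)
  also have "\<dots> = (right_adjoint A r y \<cdot> chom A y z) \<cdot> snd p z"
    using F y z by (simp add: comp_assoc)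
  also have "\<dots> \<sqsubseteq> right_adjoint A r z \<cdot> snd p z"
    by (rule comp_mono_left[OF Lr(9)]) (use F y z in auto)
  also have "\<dots> \<sqsubseteq> cc_hom Q A r p" unfolding cc_hom_right_adjoint
    by (rule Join_image_upper[of z "cobj A" "fst p" "fst r" "\<lambda>y. right_adjoint A r y \<cdot> snd p y"])
      (use F z in auto)
  finally show "(right_adjoint A r y \<cdot> snd q y) \<cdot> right_adjoint A q z \<cdot> snd p z \<sqsubseteq> cc_hom Q A r p" .
qed (use cauchy_obj_typed[OF p] cauchy_obj_typed[OF q] cauchy_obj_typed[OF r] A cc_hom_typed[OF r p]
    in auto)

end

section \<open>Symmetric completeness of \<open>(A\<^sub>c\<^sub>c)\<^sub>s\<close>\<close>

definition rep_presheaf where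
  "rep_presheaf A X \<Phi> = (\<lambda>a. if a \<in> cobj A
     then Join X (ctype A a) ((\<lambda>p. snd p a \<cdot> \<Phi> p) ` cobj (cauchy Q A)) else undefined)"

definition rep_copresheaf where
  "rep_copresheaf A X \<Phi> =
     (\<lambda>a. Join (ctype A a) X ((\<lambda>p. (\<Phi> p)\<^sup>o \<cdot> right_adjoint A p a) ` cobj (cauchy Q A)))"

context
  fixes A :: "('a, 'o, 'm) qcat" and X \<Phi>
  assumes A: "typed_qcat A" and \<Phi>: "sym_adjunction (symz Q (cauchy Q A)) X \<Phi>"
begin

lemma cauchy_sym_adjunction_typed:
  shows "X \<in> qobj Q" "\<And>p. p \<in> cobj (cauchy Q A) \<Longrightarrow> arr (\<Phi> p)"
    "\<And>p. p \<in> cobj (cauchy Q A) \<Longrightarrow> src (\<Phi> p) = X" "\<And>p. p \<in> cobj (cauchy Q A) \<Longrightarrow> trg (\<Phi> p) = fst p"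
  using presheaf_adjunctionD(1-4)[OF \<Phi>] by auto

lemma comp_dual_below_cc_hom:
  "p \<in> cobj (cauchy Q A) \<Longrightarrow> p' \<in> cobj (cauchy Q A) \<Longrightarrow> \<Phi> p' \<cdot> (\<Phi> p)\<^sup>o \<sqsubseteq> cc_hom Q A p' p"
  using below_trans[OF presheaf_adjunctionD(11)[OF \<Phi>] symz_hom_below(1)[OF typed_cauchy[OF A]]]
  by simp

lemma
  assumes a: "a \<in> cobj A"
  shows rep_presheaf_eq:
      "rep_presheaf A X \<Phi> a = Join X (ctype A a) ((\<lambda>p. snd p a \<cdot> \<Phi> p) ` cobj (cauchy Q A))"
    and rep_presheaf_typed: "arr (rep_presheaf A X \<Phi> a)" "src (rep_presheaf A X \<Phi> a) = X"
      "trg (rep_presheaf A X \<Phi> a) = ctype A a"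
    and rep_copresheaf_typed: "arr (rep_copresheaf A X \<Phi> a)"
      "src (rep_copresheaf A X \<Phi> a) = ctype A a" "trg (rep_copresheaf A X \<Phi> a) = X"
  using a A cauchy_sym_adjunction_typed cauchy_obj_typed[OF A]
  by (auto simp: rep_presheaf_def rep_copresheaf_def)

lemma rep_unit: "idq X \<sqsubseteq> Join X X ((\<lambda>a. rep_copresheaf A X \<Phi> a \<cdot> rep_presheaf A X \<Phi> a) ` cobj A)"
proof -
  note F = cauchy_sym_adjunction_typed and CF = cauchy_obj_typed[OF A]
  let ?T = "Join X X ((\<lambda>a. rep_copresheaf A X \<Phi> a \<cdot> rep_presheaf A X \<Phi> a) ` cobj A)"
  have "idq X \<sqsubseteq> Join X X ((\<lambda>p. (\<Phi> p)\<^sup>o \<cdot> \<Phi> p) ` cobj (cauchy Q A))"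
    using presheaf_adjunctionD(10)[OF \<Phi>] by simp
  also have "\<dots> \<sqsubseteq> ?T"
  proof (rule Join_image_least)
    fix p assume p: "p \<in> cobj (cauchy Q A)"
    note Lp = presheaf_adjunctionD[OF cauchy_objD(1)[OF A p]]
    have "(\<Phi> p)\<^sup>o \<cdot> \<Phi> p = (\<Phi> p)\<^sup>o \<cdot> idq (fst p) \<cdot> \<Phi> p" using F p by simp
    also have "\<dots> \<sqsubseteq> (\<Phi> p)\<^sup>o \<cdot> Join (fst p) (fst p) ((\<lambda>a. right_adjoint A p a \<cdot> snd p a) ` cobj A) \<cdot> \<Phi> p"
      by (rule comp_mono_right[OF comp_mono_left[OF Lp(10)]]) (use F p CF[OF p] in auto)
    also have "Join (fst p) (fst p) ((\<lambda>a. right_adjoint A p a \<cdot> snd p a) ` cobj A) \<cdot> \<Phi> p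
        = Join X (fst p) ((\<lambda>a. (right_adjoint A p a \<cdot> snd p a) \<cdot> \<Phi> p) ` cobj A)"
      by (rule comp_Join_image_left) (use F p CF[OF p] in auto)
    also have "(\<Phi> p)\<^sup>o \<cdot> Join X (fst p) ((\<lambda>a. (right_adjoint A p a \<cdot> snd p a) \<cdot> \<Phi> p) ` cobj A)
        = Join X X ((\<lambda>a. (\<Phi> p)\<^sup>o \<cdot> (right_adjoint A p a \<cdot> snd p a) \<cdot> \<Phi> p) ` cobj A)"
      by (rule comp_Join_image_right) (use F p CF[OF p] in auto)
    also have "\<dots> \<sqsubseteq> ?T"
    proof (rule Join_image_mono)
      fix a assume a: "a \<in> cobj A"
      have "(\<Phi> p)\<^sup>o \<cdot> (right_adjoint A p a \<cdot> snd p a) \<cdot> \<Phi> p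
          = ((\<Phi> p)\<^sup>o \<cdot> right_adjoint A p a) \<cdot> snd p a \<cdot> \<Phi> p"
        using F p CF[OF p] a by (simp add: comp_assoc)
      also have "\<dots> \<sqsubseteq> rep_copresheaf A X \<Phi> a \<cdot> rep_presheaf A X \<Phi> a"
      proof (rule comp_mono)
        show "snd p a \<cdot> \<Phi> p \<sqsubseteq> rep_presheaf A X \<Phi> a" unfolding rep_presheaf_eq[OF a]
          by (rule Join_image_upper[of p "cobj (cauchy Q A)" X "ctype A a" "\<lambda>p. snd p a \<cdot> \<Phi> p"])
            (use F CF a A p in auto)
        show "(\<Phi> p)\<^sup>o \<cdot> right_adjoint A p a \<sqsubseteq> rep_copresheaf A X \<Phi> a" unfolding rep_copresheaf_def
          by (rule Join_image_upper[of p "cobj (cauchy Q A)" "ctype A a" X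
                "\<lambda>p. (\<Phi> p)\<^sup>o \<cdot> right_adjoint A p a"])
            (use F CF a A p in auto)
      qed (use F p CF[OF p] a in auto)
      finally show "(\<Phi> p)\<^sup>o \<cdot> (right_adjoint A p a \<cdot> snd p a) \<cdot> \<Phi> p
          \<sqsubseteq> rep_copresheaf A X \<Phi> a \<cdot> rep_presheaf A X \<Phi> a" .
    qed (use F p CF[OF p] rep_presheaf_typed rep_copresheaf_typed in auto)
    finally show "(\<Phi> p)\<^sup>o \<cdot> \<Phi> p \<sqsubseteq> ?T" .
  qed (use F rep_presheaf_typed rep_copresheaf_typed in auto)
  finally show ?thesis .
qed

lemma rep_counit:
  assumes a: "a \<in> cobj A" and a': "a' \<in> cobj A"
  shows "rep_presheaf A X \<Phi> a' \<cdot> rep_copresheaf A X \<Phi> a \<sqsubseteq> chom A a' a"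
  unfolding rep_presheaf_eq[OF a'] rep_copresheaf_def
proof (rule comp_Join_Join_below)
  note F = cauchy_sym_adjunction_typed and CF = cauchy_obj_typed[OF A]
  fix p p' assume p: "p \<in> cobj (cauchy Q A)" and p': "p' \<in> cobj (cauchy Q A)"
  note ty = F p p' CF[OF p] CF[OF p'] a a' cc_hom_typed[OF A p p']
  have "(snd p a' \<cdot> \<Phi> p) \<cdot> (\<Phi> p')\<^sup>o \<cdot> right_adjoint A p' a
      = snd p a' \<cdot> (\<Phi> p \<cdot> (\<Phi> p')\<^sup>o) \<cdot> right_adjoint A p' a"
    using ty by (simp add: comp_assoc)
  also have "\<dots> \<sqsubseteq> snd p a' \<cdot> cc_hom Q A p p' \<cdot> right_adjoint A p' a"
    by (rule comp_mono_right[OF comp_mono_left[OF comp_dual_below_cc_hom[OF p' p]]]) (use ty in auto)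
  also have "\<dots> \<sqsubseteq> snd p a' \<cdot> right_adjoint A p a"
    by (rule comp_mono_right[OF cc_hom_comp_right_adjoint_below[OF A p p' a]]) (use ty in auto)
  also have "\<dots> \<sqsubseteq> chom A a' a"
    by (rule presheaf_adjunctionD(11)[OF cauchy_objD(1)[OF A p] a a'])
  finally show "(snd p a' \<cdot> \<Phi> p) \<cdot> (\<Phi> p')\<^sup>o \<cdot> right_adjoint A p' a \<sqsubseteq> chom A a' a" .
qed (use cauchy_sym_adjunction_typed cauchy_obj_typed[OF A] a a' A in auto)

lemma rep_adjunction: "presheaf_adjunction A X (rep_presheaf A X \<Phi>) (rep_copresheaf A X \<Phi>)"
proof -
  note F = cauchy_sym_adjunction_typed
  have "presheaf A X (rep_presheaf A X \<Phi>)"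
    by (rule presheaf_Join[OF A F(1), of "cobj (cauchy Q A)" fst snd \<Phi>])
      (use cauchy_objD(1)[OF A] F rep_presheaf_eq
        in \<open>auto simp: presheaf_adjunction_def\<close>)
  moreover have "copresheaf A X (rep_copresheaf A X \<Phi>)"
    by (rule copresheaf_Join[OF A F(1), of "cobj (cauchy Q A)" fst "right_adjoint A" "\<lambda>p. (\<Phi> p)\<^sup>o"])
      (use cauchy_objD(1)[OF A] F in \<open>auto simp: presheaf_adjunction_def rep_copresheaf_def\<close>)
  ultimately show ?thesis
    unfolding presheaf_adjunction_def using rep_unit rep_counit by blast
qed

lemma rep_in_cauchy: "(X, rep_presheaf A X \<Phi>) \<in> cobj (cauchy Q A)"
proof -
  note X = cauchy_sym_adjunction_typed(1)
  have "extensional_on (cobj A) (rep_presheaf A X \<Phi>)"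
    by (simp add: rep_presheaf_def extensional_on_def)
  moreover have "left_adj_presheaf Q A X (rep_presheaf A X \<Phi>)"
    using left_adj_presheaf_iff[OF A X] rep_adjunction by blast
  ultimately show ?thesis using X by (simp add: in_cauchy_iff)
qed

lemma right_adjoint_rep:
  "a \<in> cobj A \<Longrightarrow> right_adjoint A (X, rep_presheaf A X \<Phi>) a = rep_copresheaf A X \<Phi> a"
  using presheaf_adjunction_right_unique[OF A cauchy_objD(1)[OF A rep_in_cauchy] _] rep_adjunction
  by simp

lemma cc_hom_rep:
  "cc_hom Q A p (X, rep_presheaf A X \<Phi>)
     = Join X (fst p) ((\<lambda>a. right_adjoint A p a \<cdot> rep_presheaf A X \<Phi> a) ` cobj A)"
  "cc_hom Q A (X, rep_presheaf A X \<Phi>) p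
     = Join (fst p) X ((\<lambda>a. rep_copresheaf A X \<Phi> a \<cdot> snd p a) ` cobj A)"
  by (simp add: cc_hom_right_adjoint) (simp add: cc_hom_right_adjoint right_adjoint_rep cong: image_cong)

context
  fixes p
  assumes p: "p \<in> cobj (cauchy Q A)"
begin

lemma below_cc_hom_to_rep: "\<Phi> p \<sqsubseteq> cc_hom Q A p (X, rep_presheaf A X \<Phi>)"
proof -
  note F = cauchy_sym_adjunction_typed and CF = cauchy_obj_typed[OF A]
  note Lp = presheaf_adjunctionD[OF cauchy_objD(1)[OF A p]]
  have "\<Phi> p = idq (fst p) \<cdot> \<Phi> p" using F p by simp
  also have "\<dots> \<sqsubseteq> Join (fst p) (fst p) ((\<lambda>a. right_adjoint A p a \<cdot> snd p a) ` cobj A) \<cdot> \<Phi> p"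
    by (rule comp_mono_left[OF Lp(10)]) (use F p CF[OF p] in auto)
  also have "\<dots> = Join X (fst p) ((\<lambda>a. (right_adjoint A p a \<cdot> snd p a) \<cdot> \<Phi> p) ` cobj A)"
    by (rule comp_Join_image_left) (use F p CF[OF p] in auto)
  also have "\<dots> \<sqsubseteq> cc_hom Q A p (X, rep_presheaf A X \<Phi>)" unfolding cc_hom_rep(1)
  proof (rule Join_image_mono)
    fix a assume a: "a \<in> cobj A"
    have "(right_adjoint A p a \<cdot> snd p a) \<cdot> \<Phi> p = right_adjoint A p a \<cdot> snd p a \<cdot> \<Phi> p"
      using F p CF[OF p] a by (simp add: comp_assoc)
    also have "\<dots> \<sqsubseteq> right_adjoint A p a \<cdot> rep_presheaf A X \<Phi> a"
    proof (rule comp_mono_right)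
      show "snd p a \<cdot> \<Phi> p \<sqsubseteq> rep_presheaf A X \<Phi> a" unfolding rep_presheaf_eq[OF a]
        by (rule Join_image_upper[of p "cobj (cauchy Q A)" X "ctype A a" "\<lambda>p. snd p a \<cdot> \<Phi> p"])
          (use F CF a A p in auto)
    qed (use F p CF[OF p] a in auto)
    finally show "(right_adjoint A p a \<cdot> snd p a) \<cdot> \<Phi> p \<sqsubseteq> right_adjoint A p a \<cdot> rep_presheaf A X \<Phi> a" .
  qed (use F p CF[OF p] rep_presheaf_typed in auto)
  finally show ?thesis .
qed

lemma dual_below_cc_hom_from_rep: "(\<Phi> p)\<^sup>o \<sqsubseteq> cc_hom Q A (X, rep_presheaf A X \<Phi>) p"
proof -
  note F = cauchy_sym_adjunction_typed and CF = cauchy_obj_typed[OF A]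
  note Lp = presheaf_adjunctionD[OF cauchy_objD(1)[OF A p]]
  have "(\<Phi> p)\<^sup>o = (\<Phi> p)\<^sup>o \<cdot> idq (fst p)" using F p by simp
  also have "\<dots> \<sqsubseteq> (\<Phi> p)\<^sup>o \<cdot> Join (fst p) (fst p) ((\<lambda>a. right_adjoint A p a \<cdot> snd p a) ` cobj A)"
    by (rule comp_mono_right[OF Lp(10)]) (use F p CF[OF p] in auto)
  also have "\<dots> = Join (fst p) X ((\<lambda>a. (\<Phi> p)\<^sup>o \<cdot> right_adjoint A p a \<cdot> snd p a) ` cobj A)"
    by (rule comp_Join_image_right) (use F p CF[OF p] in auto)
  also have "\<dots> \<sqsubseteq> cc_hom Q A (X, rep_presheaf A X \<Phi>) p" unfolding cc_hom_rep(2)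
  proof (rule Join_image_mono)
    fix a assume a: "a \<in> cobj A"
    have "(\<Phi> p)\<^sup>o \<cdot> right_adjoint A p a \<cdot> snd p a = ((\<Phi> p)\<^sup>o \<cdot> right_adjoint A p a) \<cdot> snd p a"
      using F p CF[OF p] a by (simp add: comp_assoc)
    also have "\<dots> \<sqsubseteq> rep_copresheaf A X \<Phi> a \<cdot> snd p a"
    proof (rule comp_mono_left)
      show "(\<Phi> p)\<^sup>o \<cdot> right_adjoint A p a \<sqsubseteq> rep_copresheaf A X \<Phi> a" unfolding rep_copresheaf_def
        by (rule Join_image_upper[of p "cobj (cauchy Q A)" "ctype A a" X
              "\<lambda>p. (\<Phi> p)\<^sup>o \<cdot> right_adjoint A p a"])
          (use F CF a A p in auto)
    qed (use F p CF[OF p] a in auto)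
    finally show "(\<Phi> p)\<^sup>o \<cdot> right_adjoint A p a \<cdot> snd p a \<sqsubseteq> rep_copresheaf A X \<Phi> a \<cdot> snd p a" .
  qed (use F p CF[OF p] rep_copresheaf_typed in auto)
  finally show ?thesis .
qed

lemma cc_hom_to_rep_below:
  "cc_hom Q A p (X, rep_presheaf A X \<Phi>)
     \<sqsubseteq> Join X (fst p) ((\<lambda>p'. cc_hom Q A p p' \<cdot> \<Phi> p') ` cobj (cauchy Q A))"
  unfolding cc_hom_rep(1)
proof (rule Join_image_least)
  note F = cauchy_sym_adjunction_typed and CF = cauchy_obj_typed[OF A]
  let ?T = "Join X (fst p) ((\<lambda>p'. cc_hom Q A p p' \<cdot> \<Phi> p') ` cobj (cauchy Q A))"
  fix a assume a: "a \<in> cobj A"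
  have "right_adjoint A p a \<cdot> rep_presheaf A X \<Phi> a
      = Join X (fst p) ((\<lambda>p'. right_adjoint A p a \<cdot> snd p' a \<cdot> \<Phi> p') ` cobj (cauchy Q A))"
    unfolding rep_presheaf_eq[OF a] by (rule comp_Join_image_right) (use F CF a A p in auto)
  also have "\<dots> \<sqsubseteq> ?T"
  proof (rule Join_image_least)
    fix p' assume p': "p' \<in> cobj (cauchy Q A)"
    have "right_adjoint A p a \<cdot> snd p' a \<cdot> \<Phi> p' = (right_adjoint A p a \<cdot> snd p' a) \<cdot> \<Phi> p'"
      using F p' CF[OF p] CF[OF p'] a by (simp add: comp_assoc)
    also have "\<dots> \<sqsubseteq> cc_hom Q A p p' \<cdot> \<Phi> p'"
    proof (rule comp_mono_left)
      show "right_adjoint A p a \<cdot> snd p' a \<sqsubseteq> cc_hom Q A p p'" unfolding cc_hom_right_adjoint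
        by (rule Join_image_upper[of a "cobj A" "fst p'" "fst p" "\<lambda>y. right_adjoint A p y \<cdot> snd p' y"])
          (use CF[OF p] CF[OF p'] a A in auto)
    qed (use F p' CF[OF p] CF[OF p'] a in auto)
    also have "\<dots> \<sqsubseteq> ?T"
      by (rule Join_image_upper[of p' "cobj (cauchy Q A)" X "fst p" "\<lambda>p'. cc_hom Q A p p' \<cdot> \<Phi> p'"])
        (use F CF[OF p] p' cc_hom_typed[OF A p] in auto)
    finally show "right_adjoint A p a \<cdot> snd p' a \<cdot> \<Phi> p' \<sqsubseteq> ?T" .
  qed (use F CF CF[OF p] p a A cc_hom_typed[OF A p] in auto)
  finally show "right_adjoint A p a \<cdot> rep_presheaf A X \<Phi> a \<sqsubseteq> ?T" .
qed (use cauchy_sym_adjunction_typed cauchy_obj_typed[OF A p] A cc_hom_typed[OF A p] rep_presheaf_typed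
    in auto)

lemma cc_hom_from_rep_below:
  "cc_hom Q A (X, rep_presheaf A X \<Phi>) p
     \<sqsubseteq> Join (fst p) X ((\<lambda>p'. (\<Phi> p')\<^sup>o \<cdot> cc_hom Q A p' p) ` cobj (cauchy Q A))"
  unfolding cc_hom_rep(2)
proof (rule Join_image_least)
  note F = cauchy_sym_adjunction_typed and CF = cauchy_obj_typed[OF A]
  let ?T = "Join (fst p) X ((\<lambda>p'. (\<Phi> p')\<^sup>o \<cdot> cc_hom Q A p' p) ` cobj (cauchy Q A))"
  fix a assume a: "a \<in> cobj A"
  have "rep_copresheaf A X \<Phi> a \<cdot> snd p a
      = Join (fst p) X ((\<lambda>p'. ((\<Phi> p')\<^sup>o \<cdot> right_adjoint A p' a) \<cdot> snd p a) ` cobj (cauchy Q A))"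
    unfolding rep_copresheaf_def by (rule comp_Join_image_left) (use F CF a A p in auto)
  also have "\<dots> \<sqsubseteq> ?T"
  proof (rule Join_image_least)
    fix p' assume p': "p' \<in> cobj (cauchy Q A)"
    have "((\<Phi> p')\<^sup>o \<cdot> right_adjoint A p' a) \<cdot> snd p a = (\<Phi> p')\<^sup>o \<cdot> right_adjoint A p' a \<cdot> snd p a"
      using F p' CF[OF p] CF[OF p'] a by (simp add: comp_assoc)
    also have "\<dots> \<sqsubseteq> (\<Phi> p')\<^sup>o \<cdot> cc_hom Q A p' p"
    proof (rule comp_mono_right)
      show "right_adjoint A p' a \<cdot> snd p a \<sqsubseteq> cc_hom Q A p' p" unfolding cc_hom_right_adjoint
        by (rule Join_image_upper[of a "cobj A" "fst p" "fst p'" "\<lambda>y. right_adjoint A p' y \<cdot> snd p y"])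
          (use CF[OF p] CF[OF p'] a A in auto)
    qed (use F p' CF[OF p] CF[OF p'] a in auto)
    also have "\<dots> \<sqsubseteq> ?T"
      by (rule Join_image_upper[of p' "cobj (cauchy Q A)" "fst p" X "\<lambda>p'. (\<Phi> p')\<^sup>o \<cdot> cc_hom Q A p' p"])
        (use F CF[OF p] p' cc_hom_typed[OF A _ p] in auto)
    finally show "((\<Phi> p')\<^sup>o \<cdot> right_adjoint A p' a) \<cdot> snd p a \<sqsubseteq> ?T" .
  qed (use F CF CF[OF p] p a A cc_hom_typed[OF A _ p] in auto)
  finally show "rep_copresheaf A X \<Phi> a \<cdot> snd p a \<sqsubseteq> ?T" .
qed (use cauchy_sym_adjunction_typed cauchy_obj_typed[OF A p] A cc_hom_typed[OF A _ p] rep_copresheaf_typed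
    in auto)

lemma cc_hom_to_rep_comp_dual_below:
  assumes p': "p' \<in> cobj (cauchy Q A)"
  shows "cc_hom Q A p (X, rep_presheaf A X \<Phi>) \<cdot> (\<Phi> p')\<^sup>o \<sqsubseteq> cc_hom Q A p p'"
proof -
  note F = cauchy_sym_adjunction_typed and CF = cauchy_obj_typed[OF A]
  note r = rep_in_cauchy
  have "cc_hom Q A p (X, rep_presheaf A X \<Phi>) \<cdot> (\<Phi> p')\<^sup>o
      \<sqsubseteq> Join X (fst p) ((\<lambda>p''. cc_hom Q A p p'' \<cdot> \<Phi> p'') ` cobj (cauchy Q A)) \<cdot> (\<Phi> p')\<^sup>o"
    by (rule comp_mono_left[OF cc_hom_to_rep_below]) (use F p' cc_hom_typed[OF A p r] in auto)
  also have "\<dots> = Join (fst p') (fst p) ((\<lambda>p''. (cc_hom Q A p p'' \<cdot> \<Phi> p'') \<cdot> (\<Phi> p')\<^sup>o) ` cobj (cauchy Q A))"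
    by (rule comp_Join_image_left) (use F p' CF[OF p] cc_hom_typed[OF A p] in auto)
  also have "\<dots> \<sqsubseteq> cc_hom Q A p p'"
  proof (rule Join_image_least)
    fix p'' assume p'': "p'' \<in> cobj (cauchy Q A)"
    have "(cc_hom Q A p p'' \<cdot> \<Phi> p'') \<cdot> (\<Phi> p')\<^sup>o = cc_hom Q A p p'' \<cdot> (\<Phi> p'' \<cdot> (\<Phi> p')\<^sup>o)"
      using F p' p'' cc_hom_typed[OF A p p''] by (simp add: comp_assoc)
    also have "\<dots> \<sqsubseteq> cc_hom Q A p p'' \<cdot> cc_hom Q A p'' p'"
      by (rule comp_mono_right[OF comp_dual_below_cc_hom[OF p' p'']])
        (use F p' p'' cc_hom_typed[OF A p p''] in auto)
    also have "\<dots> \<sqsubseteq> cc_hom Q A p p'" by (rule cc_hom_comp_below[OF A p' p'' p])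
    finally show "(cc_hom Q A p p'' \<cdot> \<Phi> p'') \<cdot> (\<Phi> p')\<^sup>o \<sqsubseteq> cc_hom Q A p p'" .
  qed (use F p' CF[OF p] CF[OF p'] cc_hom_typed[OF A p] cc_hom_typed[OF A p p'] in auto)
  finally show ?thesis .
qed

lemma comp_cc_hom_from_rep_below:
  assumes p': "p' \<in> cobj (cauchy Q A)"
  shows "\<Phi> p' \<cdot> cc_hom Q A (X, rep_presheaf A X \<Phi>) p \<sqsubseteq> cc_hom Q A p' p"
proof -
  note F = cauchy_sym_adjunction_typed and CF = cauchy_obj_typed[OF A]
  have "\<Phi> p' \<cdot> cc_hom Q A (X, rep_presheaf A X \<Phi>) p
      \<sqsubseteq> \<Phi> p' \<cdot> Join (fst p) X ((\<lambda>p''. (\<Phi> p'')\<^sup>o \<cdot> cc_hom Q A p'' p) ` cobj (cauchy Q A))"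
    by (rule comp_mono_right[OF cc_hom_from_rep_below])
      (use F p' cc_hom_typed[OF A rep_in_cauchy p] in auto)
  also have "\<dots> = Join (fst p) (fst p') ((\<lambda>p''. \<Phi> p' \<cdot> (\<Phi> p'')\<^sup>o \<cdot> cc_hom Q A p'' p) ` cobj (cauchy Q A))"
    by (rule comp_Join_image_right) (use F p' CF[OF p] cc_hom_typed[OF A _ p] in auto)
  also have "\<dots> \<sqsubseteq> cc_hom Q A p' p"
  proof (rule Join_image_least)
    fix p'' assume p'': "p'' \<in> cobj (cauchy Q A)"
    have "\<Phi> p' \<cdot> (\<Phi> p'')\<^sup>o \<cdot> cc_hom Q A p'' p = (\<Phi> p' \<cdot> (\<Phi> p'')\<^sup>o) \<cdot> cc_hom Q A p'' p"
      using F p' p'' cc_hom_typed[OF A p'' p] by (simp add: comp_assoc)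
    also have "\<dots> \<sqsubseteq> cc_hom Q A p' p'' \<cdot> cc_hom Q A p'' p"
      by (rule comp_mono_left[OF comp_dual_below_cc_hom[OF p'' p']])
        (use F p' p'' cc_hom_typed[OF A p'' p] in auto)
    also have "\<dots> \<sqsubseteq> cc_hom Q A p' p" by (rule cc_hom_comp_below[OF A p p'' p'])
    finally show "\<Phi> p' \<cdot> (\<Phi> p'')\<^sup>o \<cdot> cc_hom Q A p'' p \<sqsubseteq> cc_hom Q A p' p" .
  qed (use F p' CF[OF p] CF[OF p'] cc_hom_typed[OF A _ p] cc_hom_typed[OF A p' p] in auto)
  finally show ?thesis .
qed

lemma sym_adjunction_represented: "\<Phi> p = chom (symz Q (cauchy Q A)) p (X, rep_presheaf A X \<Phi>)"
proof -
  note F = cauchy_sym_adjunction_typed and TC = typed_cauchy[OF A] and r = rep_in_cauchy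
  let ?r = "(X, rep_presheaf A X \<Phi>)"
  let ?u = "chom (symz Q (cauchy Q A)) p ?r"
  have u: "arr ?u" "src ?u = X" "trg ?u = fst p"
    using symz_hom_typed[OF TC r p] F by auto
  have ge: "\<Phi> p \<sqsubseteq> ?u"
  proof (rule symz_hom_greatest[OF TC r p])
    show "\<Phi> p \<sqsubseteq> chom (cauchy Q A) p ?r" using below_cc_hom_to_rep by simp
    show "\<Phi> p \<sqsubseteq> (chom (cauchy Q A) ?r p)\<^sup>o"
      using dual_mono[OF dual_below_cc_hom_from_rep] F p by simp
  qed
  have bound: "?u \<cdot> (\<Phi> p')\<^sup>o \<sqsubseteq> chom (symz Q (cauchy Q A)) p p'"
    if p': "p' \<in> cobj (cauchy Q A)" for p'
  proof (rule symz_hom_greatest[OF TC p' p])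
    note ty = u F p' symz_hom_typed[OF TC r p]
    have "?u \<cdot> (\<Phi> p')\<^sup>o \<sqsubseteq> cc_hom Q A p ?r \<cdot> (\<Phi> p')\<^sup>o"
      by (rule comp_mono_left[OF symz_hom_below(1)[OF TC r p, unfolded cauchy_simps]]) (use ty in auto)
    also have "\<dots> \<sqsubseteq> cc_hom Q A p p'" by (rule cc_hom_to_rep_comp_dual_below[OF p'])
    finally show "?u \<cdot> (\<Phi> p')\<^sup>o \<sqsubseteq> chom (cauchy Q A) p p'" by simp
    have dual_u: "?u\<^sup>o \<sqsubseteq> cc_hom Q A ?r p"
      using dual_mono[OF symz_hom_below(2)[OF TC r p]] cc_hom_typed[OF A r p] by simp
    have "(?u \<cdot> (\<Phi> p')\<^sup>o)\<^sup>o = \<Phi> p' \<cdot> ?u\<^sup>o" using ty by (simp add: dual_comp)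
    also have "\<dots> \<sqsubseteq> \<Phi> p' \<cdot> cc_hom Q A ?r p"
      by (rule comp_mono_right[OF dual_u]) (use ty in auto)
    also have "\<dots> \<sqsubseteq> cc_hom Q A p' p" by (rule comp_cc_hom_from_rep_below[OF p'])
    finally show "?u \<cdot> (\<Phi> p')\<^sup>o \<sqsubseteq> (chom (cauchy Q A) p' p)\<^sup>o"
      using dual_mono[of "(?u \<cdot> (\<Phi> p')\<^sup>o)\<^sup>o"] ty by simp
  qed
  have le: "?u \<sqsubseteq> \<Phi> p"
    by (rule sym_adjunction_below[OF typed_symz[OF TC] \<Phi> _ _ _ _ bound]) (use p u in simp_all)
  show ?thesis by (rule below_antisym[OF ge le])
qed

end

end

lemma symz_cauchy_sym_complete:
  assumes A: "typed_qcat A"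
  shows "sym_complete Q (symz Q (cauchy Q A))"
  unfolding sym_complete_def
proof (intro ballI allI impI)
  fix X \<Phi>
  assume X: "X \<in> qobj Q" and S: "sym_left_adj_presheaf Q (symz Q (cauchy Q A)) X \<Phi>"
  have \<Phi>: "sym_adjunction (symz Q (cauchy Q A)) X \<Phi>"
    by (rule sym_left_adj_presheaf_adjunction[OF typed_symz[OF typed_cauchy[OF A]] X S])
  show "\<exists>a\<in>cobj (symz Q (cauchy Q A)). ctype (symz Q (cauchy Q A)) a = X
      \<and> (\<forall>p\<in>cobj (symz Q (cauchy Q A)). \<Phi> p = chom (symz Q (cauchy Q A)) p a)"
    using rep_in_cauchy[OF A \<Phi>] sym_adjunction_represented[OF A \<Phi>] by force
qed

end

theorem proposition3p4:
  fixes Q :: "('o, 'm) iquantaloid" and A :: "('a, 'o, 'm) qcat"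
  assumes "iquantaloid Q" and "qcat Q A"
  shows "full_embedding Q (symcomp Q (symz Q A)) (symz Q (cauchy Q A)) (Lmap Q A)
    \<and> (\<forall>(B :: ('b, 'o, 'm) qcat) F. qcat Q B \<and> qfunctor Q A B F \<longrightarrow>
         (\<forall>p\<in>cobj (symcomp Q (symz Q A)).
            cc_map Q A B F (Lmap Q A p)
          = Lmap Q B (cc_map Q (symz Q A) (symz Q B) F p)))
    \<and> sym_complete Q (symz Q (cauchy Q A))"
proof -
  interpret involutive_quantaloid Q by standard (rule assms(1))
  show ?thesis
    using L_full_embedding[OF assms(2)] Lmap_natural[OF assms(2)]
      symz_cauchy_sym_complete[OF qcat_typed[OF assms(2)]]
    by blast
qed

end
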